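(* Assume the standing hypotheses of the context and let $\varepsilon\in(0,\varepsilon_0]$. Let $\bar{\boldsymbol\rho}=(\bar\rho_1,\bar\rho_2)\in\mathfrak X_0$ be any global minimizer of $\mathcal E_\varepsilon$ over $\mathcal P_2(\mathbb R^d)^2$. Then there are constants $C_1,C_2>0$ such that on $\mathbb R^d$ \[F_1'(\bar\rho_1)+\varepsilon\partial_{r_1}h(\bar\rho_1,\bar\rho_2)=(C_1-K*\bar\rho_2)_+,\qquad F_2'(\bar\rho_2)+\varepsilon\partial_{r_2}h(\bar\rho_1,\bar\rho_2)=(C_2-K*\bar\rho_1)_+ ,\] and the supports of $\bar\rho_1,\bar\rho_2$ are the compact convex sets \[\mathrm{supp}\,\bar\rho_1=\{K*\bar\rho_2\le C_1\},\qquad \mathrm{supp}\,\bar\rho_2=\{K*\bar\rho_1\le C_2\}.\]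
   Context: Let $d\ge1$. Standing hypotheses. (K): $K:\mathbb R^d\to[0,\infty)$ radially symmetric, $K(0)=0$, $K\in C^2$, $\nabla^2K\ge\lambda\,\mathrm{Id}$ for some $\lambda>0$, $\|\nabla^2K\|\le C_K$. (F): for $j=1,2$, $F_j:[0,\infty)\to[0,\infty)$ is $C^2$, $F_j''>0$ on $(0,\infty)$, $F_j(0)=F_j'(0)=0$, $\liminf_{r\to\infty}F_j''(r)>0$, $\limsup_{r\to\infty}F_j'(r)/F_j(r)<\infty$; there are $m_j,M_j>0,\beta_j\ge0,r_0>0$ with $m_jr^{\beta_j}\le F_j''(r)\le M_jr^{\beta_j}$ on $[0,r_0]$; $F_j(r)-rF_j'(r)+r^2F_j''(r)\ge0$. (h): $h:[0,\infty)^2\to\mathbb R$ is $C^2$, $h$ and $\nabla h$ vanish on $\{r_1=0\}\cup\{r_2=0\}$. ($\theta$): with $\theta_{j,i}(\mathbf u)=\partial_{r_i}\partial_{r_j}h(\mathbf r)/F_i''(r_i)$, $r_k=(F_k')^{-1}(u_k)$, each $\theta_{j,i}$ is locally Lipschitz on $[0,\infty)^2$ and $|\theta_{j,i}(\mathbf u)|\le\kappa_{j,i}\min\{1,u_1,u_2,\sqrt{(F_i')^{-1}(u_i)/(F_j')^{-1}(u_j)}\}$ for constants $\kappa_{j,i}>0$. Notation: $\mathcal P_2(\mathbb R^d)$ probability measures with finite second moment (absolutely continuous ones identified with densities); $\mathfrak m_1[\rho]=\int x\rho$; $\mathfrak X_0=\{\boldsymbol\rho\in\mathcal P_2(\mathbb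 R^d)^2:\mathfrak m_1[\rho_1]+\mathfrak m_1[\rho_2]=0\}$; $\mathcal E_\varepsilon(\boldsymbol\rho)=\int[F_1(\rho_1)+F_2(\rho_2)+\varepsilon h(\rho_1,\rho_2)+\rho_1K*\rho_2]dx$, $=+\infty$ unless both components are absolutely continuous with integrand in $L^1$. $\varepsilon_0>0$ is a number such that $\mathbf r\mapsto F_1(r_1)+F_2(r_2)+2\varepsilon_0h(\mathbf r)$ is convex on $[0,\infty)^2$. *)

theory Defs
  imports "HOL-Analysis.Analysis"
begin

text \<open>Conventional power r^b for r \<ge> 0 with 0^0 = 1 (Isabelle's powr has 0 powr b = 0).\<close>
definition pow0 :: "real \<Rightarrow> real \<Rightarrow> real" where
  "pow0 r b = (if r = 0 then (if b = 0 then 1 else 0) else r powr b)"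

definition quadrant :: "(real \<times> real) set" where
  "quadrant = {0..} \<times> {0..}"

definition locally_lipschitz_on :: "('a::metric_space) set \<Rightarrow> ('a \<Rightarrow> 'b::metric_space) \<Rightarrow> bool" where
  "locally_lipschitz_on S f \<longleftrightarrow>
     (\<forall>x\<in>S. \<exists>e>0. \<exists>L. L-lipschitz_on (cball x e \<inter> S) f)"

definition K_hyp :: "('a::euclidean_space \<Rightarrow> real) \<Rightarrow> bool" where
  "K_hyp K \<longleftrightarrow>
     (\<forall>x. 0 \<le> K x) \<and> (\<forall>x y. norm x = norm y \<longrightarrow> K x = K y) \<and> K 0 = 0 \<and>
     (\<exists>DK H lam CK. lam > 0 \<and>
        (\<forall>x. (K has_derivative (\<lambda>v. DK x \<bullet> v)) (at x)) \<and>
        (\<forall>x. (DK has_derivative blinfun_apply (H x)) (at x)) \<and>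
        continuous_on UNIV (H :: 'a \<Rightarrow> 'a \<Rightarrow>\<^sub>L 'a) \<and>
        (\<forall>x v. lam * (norm v)\<^sup>2 \<le> v \<bullet> blinfun_apply (H x) v) \<and>
        (\<forall>x. norm (H x) \<le> CK))"

definition F_hyp :: "(real \<Rightarrow> real) \<Rightarrow> (real \<Rightarrow> real) \<Rightarrow> (real \<Rightarrow> real) \<Rightarrow> bool" where
  "F_hyp F F' F'' \<longleftrightarrow>
     (\<forall>r\<ge>0. 0 \<le> F r) \<and>
     (\<forall>r\<ge>0. (F has_real_derivative F' r) (at r within {0..}) \<and>
             (F' has_real_derivative F'' r) (at r within {0..})) \<and>
     continuous_on {0..} F'' \<and>
     (\<forall>r>0. 0 < F'' r) \<and> F 0 = 0 \<and> F' 0 = 0 \<and>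
     Liminf at_top (\<lambda>r. ereal (F'' r)) > 0 \<and>
     Limsup at_top (\<lambda>r. ereal (F' r / F r)) < \<infinity> \<and>
     (\<exists>m M \<beta> r0. m > 0 \<and> M > 0 \<and> \<beta> \<ge> 0 \<and> r0 > 0 \<and>
        (\<forall>r\<in>{0..r0}. m * pow0 r \<beta> \<le> F'' r \<and> F'' r \<le> M * pow0 r \<beta>)) \<and>
     (\<forall>r\<ge>0. 0 \<le> F r - r * F' r + r\<^sup>2 * F'' r)"

definition h_hyp :: "(real \<times> real \<Rightarrow> real) \<Rightarrow> (real \<times> real \<Rightarrow> real) \<Rightarrow> (real \<times> real \<Rightarrow> real) \<Rightarrow>
    (real \<times> real \<Rightarrow> real) \<Rightarrow> (real \<times> real \<Rightarrow> real) \<Rightarrow> (real \<times> real \<Rightarrow> real) \<Rightarrow> (real \<times> real \<Rightarrow> real) \<Rightarrow> bool" where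
  "h_hyp h h1 h2 h11 h12 h21 h22 \<longleftrightarrow>
     (\<forall>r\<in>quadrant.
        (h has_derivative (\<lambda>(a,b). h1 r * a + h2 r * b)) (at r within quadrant) \<and>
        (h1 has_derivative (\<lambda>(a,b). h11 r * a + h12 r * b)) (at r within quadrant) \<and>
        (h2 has_derivative (\<lambda>(a,b). h21 r * a + h22 r * b)) (at r within quadrant)) \<and>
     continuous_on quadrant h11 \<and> continuous_on quadrant h12 \<and>
     continuous_on quadrant h21 \<and> continuous_on quadrant h22 \<and>
     (\<forall>r\<in>quadrant. (fst r = 0 \<or> snd r = 0) \<longrightarrow> h r = 0 \<and> h1 r = 0 \<and> h2 r = 0)"

definition Finv :: "(real \<Rightarrow> real) \<Rightarrow> real \<Rightarrow> real" where
  "Finv F' = the_inv_into {0..} F'"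

text \<open>Hypothesis (theta) for one pair (j,i): hji = d_{r_i} d_{r_j} h, Fi'' = F_i'',
  seli/selj select the i-th/j-th component of r = (r1,r2).\<close>
definition theta :: "(real \<times> real \<Rightarrow> real) \<Rightarrow> (real \<Rightarrow> real) \<Rightarrow> (real \<times> real \<Rightarrow> real) \<Rightarrow>
    (real \<Rightarrow> real) \<Rightarrow> (real \<Rightarrow> real) \<Rightarrow> real \<times> real \<Rightarrow> real" where
  "theta hji Fi'' seli F1' F2' u =
     (let r = (Finv F1' (fst u), Finv F2' (snd u)) in hji r / Fi'' (seli r))"

definition theta_hyp :: "(real \<times> real \<Rightarrow> real) \<Rightarrow> (real \<Rightarrow> real) \<Rightarrow> (real \<times> real \<Rightarrow> real) \<Rightarrow>
    (real \<times> real \<Rightarrow> real) \<Rightarrow> (real \<Rightarrow> real) \<Rightarrow> (real \<Rightarrow> real) \<Rightarrow> bool" where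
  "theta_hyp hji Fi'' seli selj F1' F2' \<longleftrightarrow>
     locally_lipschitz_on quadrant (theta hji Fi'' seli F1' F2') \<and>
     (\<exists>\<kappa>>0. \<forall>u\<in>quadrant.
        (let r = (Finv F1' (fst u), Finv F2' (snd u)) in
          \<bar>theta hji Fi'' seli F1' F2' u\<bar>
            \<le> \<kappa> * min 1 (min (fst u) (min (snd u) (sqrt (seli r / selj r))))))"

text \<open>Absolutely continuous elements of P_2(R^d), identified with their densities.\<close>
definition P2dens :: "('a::euclidean_space \<Rightarrow> real) \<Rightarrow> bool" where
  "P2dens \<rho> \<longleftrightarrow> \<rho> \<in> borel_measurable lborel \<and> (\<forall>x. 0 \<le> \<rho> x) \<and>
     integrable lborel \<rho> \<and> integral\<^sup>L lborel \<rho> = 1 \<and>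
     integrable lborel (\<lambda>x. (norm x)\<^sup>2 * \<rho> x)"

definition moment1 :: "('a::euclidean_space \<Rightarrow> real) \<Rightarrow> 'a" where
  "moment1 \<rho> = integral\<^sup>L lborel (\<lambda>x. \<rho> x *\<^sub>R x)"

definition X0 :: "('a::euclidean_space \<Rightarrow> real) \<Rightarrow> ('a \<Rightarrow> real) \<Rightarrow> bool" where
  "X0 \<rho>1 \<rho>2 \<longleftrightarrow> P2dens \<rho>1 \<and> P2dens \<rho>2 \<and> moment1 \<rho>1 + moment1 \<rho>2 = 0"

definition conv :: "('a::euclidean_space \<Rightarrow> real) \<Rightarrow> ('a \<Rightarrow> real) \<Rightarrow> 'a \<Rightarrow> real" where
  "conv K \<rho> x = (LINT y|lborel. K (x - y) * \<rho> y)"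

text \<open>The energy E_eps on pairs of densities (+oo if the integrand is not in L^1).
  Pairs of measures not both absolutely continuous have energy +oo by definition.\<close>
definition energy :: "(real \<Rightarrow> real) \<Rightarrow> (real \<Rightarrow> real) \<Rightarrow> (real \<times> real \<Rightarrow> real) \<Rightarrow>
    ('a::euclidean_space \<Rightarrow> real) \<Rightarrow> real \<Rightarrow> ('a \<Rightarrow> real) \<Rightarrow> ('a \<Rightarrow> real) \<Rightarrow> ereal" where
  "energy F1 F2 h K \<epsilon> \<rho>1 \<rho>2 =
     (let f = (\<lambda>x. F1 (\<rho>1 x) + F2 (\<rho>2 x) + \<epsilon> * h (\<rho>1 x, \<rho>2 x) + \<rho>1 x * conv K \<rho>2 x)
      in if integrable lborel f then ereal (integral\<^sup>L lborel f) else \<infinity>)"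

definition dsupp :: "('a::euclidean_space \<Rightarrow> real) \<Rightarrow> 'a set" where
  "dsupp \<rho> = {x. \<forall>e>0. 0 < emeasure (density lborel (\<lambda>y. ennreal (\<rho> y))) (ball x e)}"

end

theory Submission
  imports Defs
begin

text \<open>
  Fix one component \<sigma> and view the energy as a functional of the other one, \<rho>, namely
  \<integral> \<Psi>(\<rho>, \<sigma>) + \<rho> V with V = K * \<sigma> and \<Psi>(r, s) = F(r) + \<epsilon> h(r, s), which is convex
  in r for \<epsilon> \<le> \<epsilon>0. Moving a little mass from a set where the first variation
  \<Phi> = \<partial>\<Psi>/\<partial>r(\<rho>, \<sigma>) + V exceeds a level a to a set where it stays below some b < a would
  lower the energy. Hence \<Phi> equals its essential infimum C wherever \<rho> > 0 and is at least C
  everywhere. Since \<partial>\<Psi>/\<partial>r vanishes at r = 0 and is positive for r > 0, this reads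
  \<partial>\<Psi>/\<partial>r(\<rho>, \<sigma>) = max (C - V) 0, and {\<rho> > 0} = {V < C} up to a null set. As K is convex
  with quadratic growth, V is convex, continuous and coercive, so the support of \<rho>, the
  closure of {V < C}, is the compact convex set {V \<le> C}. The energy is symmetric under
  exchanging the two components (Fubini and K(-z) = K(z)), which gives the second equation.
\<close>

section \<open>Convex kernels with quadratic growth\<close>

lemma quadratic_lower_bound_from_second_derivative:
  fixes \<phi> \<phi>' \<phi>'' :: "real \<Rightarrow> real"
  assumes \<phi>': "\<And>t. (\<phi> has_real_derivative \<phi>' t) (at t)"
    and \<phi>'': "\<And>t. (\<phi>' has_real_derivative \<phi>'' t) (at t)"
    and c: "\<And>t. c \<le> \<phi>'' t"
  shows "\<phi> 0 + \<phi>' 0 * t + c / 2 * t\<^sup>2 \<le> \<phi> t"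
proof -
  have convex: "convex_on UNIV (\<lambda>t. \<phi> t - c / 2 * t\<^sup>2)"
    by (rule f''_ge0_imp_convex[where f'="\<lambda>t. \<phi>' t - c * t" and f''="\<lambda>t. \<phi>'' t - c"])
      (auto intro!: derivative_eq_intros \<phi>' \<phi>'' simp: c)
  have "((\<lambda>t. \<phi> t - c / 2 * t\<^sup>2) has_real_derivative \<phi>' 0 - c * 0) (at 0)"
    by (auto intro!: derivative_eq_intros \<phi>')
  from convex_on_imp_above_tangent[OF convex connected_UNIV _ _ this]
  show ?thesis by (simp add: algebra_simps)
qed

lemma has_derivative_along_line:
  fixes f :: "'a::real_inner \<Rightarrow> real"
  assumes Df: "\<And>x. (f has_derivative (\<lambda>v. Df x \<bullet> v)) (at x)"
    and H: "\<And>x. (Df has_derivative blinfun_apply (H x)) (at x)"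
  shows "((\<lambda>t. f (x + t *\<^sub>R v)) has_real_derivative Df (x + t *\<^sub>R v) \<bullet> v) (at t)"
    and "((\<lambda>t. Df (x + t *\<^sub>R v) \<bullet> v) has_real_derivative v \<bullet> H (x + t *\<^sub>R v) v) (at t)"
proof -
  have line: "((\<lambda>t. x + t *\<^sub>R v) has_derivative (\<lambda>s. s *\<^sub>R v)) (at t)"
    by (auto intro!: derivative_eq_intros)
  show "((\<lambda>t. f (x + t *\<^sub>R v)) has_real_derivative Df (x + t *\<^sub>R v) \<bullet> v) (at t)"
    using has_derivative_compose[OF line Df] unfolding has_field_derivative_def
    by (rule has_derivative_eq_rhs) (auto simp: fun_eq_iff inner_commute)
  show "((\<lambda>t. Df (x + t *\<^sub>R v) \<bullet> v) has_real_derivative v \<bullet> H (x + t *\<^sub>R v) v) (at t)"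
    using has_derivative_inner_left[OF has_derivative_compose[OF line H], where b=v]
    unfolding has_field_derivative_def
    by (rule has_derivative_eq_rhs) (auto simp: fun_eq_iff inner_commute blinfun.scaleR_right)
qed

locale convex_quadratic_kernel =
  fixes K :: "'a::euclidean_space \<Rightarrow> real" and lam CK :: real
  assumes lam_pos: "0 < lam"
    and continuous: "continuous_on UNIV K"
    and convex: "convex_on UNIV K"
    and symmetric: "K (- z) = K z"
    and lower_bound: "lam / 2 * (norm z)\<^sup>2 \<le> K z"
    and upper_bound: "K z \<le> CK / 2 * (norm z)\<^sup>2"

lemma K_hyp_imp_convex_quadratic_kernel:
  assumes "K_hyp K"
  obtains lam CK where "convex_quadratic_kernel K lam CK"
proof -
  from assms obtain DK H lam CK where lam: "lam > 0"
    and dK: "\<And>x. (K has_derivative (\<lambda>v. DK x \<bullet> v)) (at x)"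
    and dDK: "\<And>x. (DK has_derivative blinfun_apply (H x)) (at x)"
    and H_lower: "\<And>x v. lam * (norm v)\<^sup>2 \<le> v \<bullet> H x v"
    and H_norm: "\<And>x. norm (H x) \<le> CK"
    and K0: "K 0 = 0" and K_nonneg: "\<And>x. 0 \<le> K x"
    and radial: "\<And>x y. norm x = norm y \<Longrightarrow> K x = K y"
    unfolding K_hyp_def by blast
  note d1 = has_derivative_along_line(1)[OF dK dDK] and d2 = has_derivative_along_line(2)[OF dK dDK]
  have H_upper: "v \<bullet> H x v \<le> CK * (norm v)\<^sup>2" for x v
  proof -
    have "v \<bullet> H x v \<le> norm v * (norm (H x) * norm v)"
      by (metis norm_cauchy_schwarz norm_blinfun norm_ge_zero mult_left_mono order_trans)
    also have "\<dots> \<le> norm v * (CK * norm v)"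
      by (intro mult_left_mono mult_right_mono H_norm) auto
    finally show ?thesis by (simp add: power2_eq_square mult_ac)
  qed
  have "convex_on UNIV K"
  proof (rule convex_onI)
    fix t :: real and x y :: 'a assume t: "0 < t" "t < 1"
    have "convex_on UNIV (\<lambda>t. K (x + t *\<^sub>R (y - x)))"
      using order_trans[OF _ H_lower] lam by (intro f''_ge0_imp_convex[OF _ d1 d2]) auto
    from convex_onD[OF this, of t 0 1] t
    show "K ((1 - t) *\<^sub>R x + t *\<^sub>R y) \<le> (1 - t) * K x + t * K y"
      by (simp add: algebra_simps)
  qed simp
  moreover have "DK 0 \<bullet> z = 0" for z
    using DERIV_local_min[OF d1[of 0 z 0], of 1] K0 K_nonneg by simp
  then have "lam / 2 * (norm z)\<^sup>2 \<le> K z" "K z \<le> CK / 2 * (norm z)\<^sup>2" for z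
    using quadratic_lower_bound_from_second_derivative[OF d1[of 0 z] d2[of 0 z],
        where c="lam * (norm z)\<^sup>2" and t=1]
      quadratic_lower_bound_from_second_derivative[OF DERIV_minus[OF d1[of 0 z]]
        DERIV_minus[OF d2[of 0 z]], where c="- CK * (norm z)\<^sup>2" and t=1]
      H_lower[of z] H_upper[of z] K0
    by (auto simp: algebra_simps)
  moreover have "continuous_on UNIV K"
    using dK by (meson continuous_at_imp_continuous_on has_derivative_continuous)
  ultimately have "convex_quadratic_kernel K lam CK"
    using lam radial[of "- z" z for z] by unfold_locales auto
  then show ?thesis by (rule that)
qed

section \<open>The potential of a density\<close>

lemma norm_diff_squared_le:
  fixes x y :: "'a::real_normed_vector"
  shows "(norm (x - y))\<^sup>2 \<le> 2 * (norm x)\<^sup>2 + 2 * (norm y)\<^sup>2"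
proof -
  have "(norm (x - y))\<^sup>2 \<le> (norm x + norm y)\<^sup>2"
    by (simp add: norm_triangle_ineq4 power_mono)
  also have "\<dots> \<le> 2 * (norm x)\<^sup>2 + 2 * (norm y)\<^sup>2"
    using zero_le_power2[of "norm x - norm y"] by (simp add: power2_eq_square algebra_simps)
  finally show ?thesis .
qed

definition finite_second_moment :: "('a::euclidean_space \<Rightarrow> real) \<Rightarrow> bool" where
  "finite_second_moment g \<longleftrightarrow> integrable lborel g \<and> integrable lborel (\<lambda>x. (norm x)\<^sup>2 * g x)"

lemma P2dens_finite_second_moment: "P2dens \<rho> \<Longrightarrow> finite_second_moment \<rho>"
  unfolding P2dens_def finite_second_moment_def by blast

lemma integrable_bounded_support:
  fixes f :: "'a::euclidean_space \<Rightarrow> real"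
  assumes "f \<in> borel_measurable lborel" and "\<And>x. \<bar>f x\<bar> \<le> c" and "\<And>x. f x \<noteq> 0 \<Longrightarrow> norm x \<le> R"
  shows "integrable lborel f"
proof (rule Bochner_Integration.integrable_bound)
  show "integrable lborel (\<lambda>x. c * indicator (cball 0 R) x)"
    using emeasure_bounded_finite[OF bounded_cball]
    by (intro integrable_mult_right integrable_real_indicator) auto
  show "AE x in lborel. norm (f x) \<le> norm (c * indicator (cball 0 R) x)"
  proof (intro AE_I2)
    fix x show "norm (f x) \<le> norm (c * indicator (cball 0 R) x)"
      using assms(2)[of 0] assms(2,3)[of x] by (cases "f x = 0") (auto simp: indicator_def)
  qed
qed (use assms(1) in simp)

lemma finite_second_moment_bounded_support:
  fixes g :: "'a::euclidean_space \<Rightarrow> real"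
  assumes g: "g \<in> borel_measurable lborel" and "\<And>x. \<bar>g x\<bar> \<le> B" and "\<And>x. g x \<noteq> 0 \<Longrightarrow> norm x \<le> R"
  shows "finite_second_moment g"
  unfolding finite_second_moment_def
proof
  show "integrable lborel g" by (rule integrable_bounded_support[OF assms])
  have "\<bar>(norm x)\<^sup>2 * g x\<bar> \<le> R\<^sup>2 * B" for x
    using assms(2,3)[of x] by (cases "g x = 0") (auto simp: abs_mult intro!: mult_mono power_mono)
  then show "integrable lborel (\<lambda>x. (norm x)\<^sup>2 * g x)"
    using assms(3) by (intro integrable_bounded_support[where R=R]) (use g in auto)
qed

context convex_quadratic_kernel
begin

lemma nonneg: "0 \<le> K z"
  using lower_bound[of z] lam_pos by (meson order_trans zero_le_mult_iff zero_le_power2 less_imp_le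
      divide_nonneg_pos zero_less_numeral)

lemma CK_nonneg: "0 \<le> CK"
proof -
  obtain b :: 'a where "b \<in> Basis" using nonempty_Basis by blast
  then show ?thesis using nonneg[of b] upper_bound[of b] by simp
qed

lemma borel_measurable [measurable]: "K \<in> borel_measurable borel"
  using borel_measurable_continuous_onI[OF continuous] .

lemma shifted_upper_bound: "K (x - y) \<le> CK * ((norm x)\<^sup>2 + (norm y)\<^sup>2)"
  using upper_bound[of "x - y"] mult_left_mono[OF norm_diff_squared_le[of x y], of "CK / 2"] CK_nonneg
  by (simp add: algebra_simps)

lemma conv_integrand_bound:
  "\<bar>K (x - y) * g y\<bar> \<le> CK * (norm x)\<^sup>2 * \<bar>g y\<bar> + CK * ((norm y)\<^sup>2 * \<bar>g y\<bar>)"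
  using mult_right_mono[OF shifted_upper_bound[of x y] abs_ge_zero[of "g y"]] nonneg[of "x - y"]
  by (simp add: abs_mult algebra_simps)

lemma integrable_conv_integrand:
  assumes "finite_second_moment g"
  shows "integrable lborel (\<lambda>y. K (x - y) * g y)"
proof (rule Bochner_Integration.integrable_bound)
  have "integrable lborel (\<lambda>y. \<bar>g y\<bar>)" "integrable lborel (\<lambda>y. \<bar>(norm y)\<^sup>2 * g y\<bar>)"
    using assms unfolding finite_second_moment_def by auto
  then show "integrable lborel (\<lambda>y. CK * (norm x)\<^sup>2 * \<bar>g y\<bar> + CK * ((norm y)\<^sup>2 * \<bar>g y\<bar>))"
    by (auto simp: abs_mult)
  have [measurable]: "g \<in> borel_measurable borel"
    using assms by (auto simp: finite_second_moment_def)
  show "(\<lambda>y. K (x - y) * g y) \<in> borel_measurable lborel" by measurable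
  show "AE y in lborel. norm (K (x - y) * g y) \<le> norm (CK * (norm x)\<^sup>2 * \<bar>g y\<bar> + CK * ((norm y)\<^sup>2 * \<bar>g y\<bar>))"
    using conv_integrand_bound CK_nonneg by (intro AE_I2) (simp add: abs_le_iff)
qed

lemma integral_abs_conv_integrand_le:
  assumes "finite_second_moment g"
  shows "(LINT y|lborel. \<bar>K (x - y) * g y\<bar>)
    \<le> CK * (norm x)\<^sup>2 * (LINT y|lborel. \<bar>g y\<bar>) + CK * (LINT y|lborel. (norm y)\<^sup>2 * \<bar>g y\<bar>)"
proof -
  have "integrable lborel (\<lambda>y. \<bar>g y\<bar>)" "integrable lborel (\<lambda>y. (norm y)\<^sup>2 * \<bar>g y\<bar>)"
    using assms integrable_abs[of lborel "\<lambda>y. (norm y)\<^sup>2 * g y"]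
    unfolding finite_second_moment_def by (auto simp: abs_mult)
  then have "(LINT y|lborel. \<bar>K (x - y) * g y\<bar>)
      \<le> (LINT y|lborel. CK * (norm x)\<^sup>2 * \<bar>g y\<bar> + CK * ((norm y)\<^sup>2 * \<bar>g y\<bar>))"
    using integrable_conv_integrand[OF assms] conv_integrand_bound
    by (intro integral_mono) auto
  also have "\<dots> = CK * (norm x)\<^sup>2 * (LINT y|lborel. \<bar>g y\<bar>) + CK * (LINT y|lborel. (norm y)\<^sup>2 * \<bar>g y\<bar>)"
    using \<open>integrable lborel (\<lambda>y. \<bar>g y\<bar>)\<close> \<open>integrable lborel (\<lambda>y. (norm y)\<^sup>2 * \<bar>g y\<bar>)\<close> by simp
  finally show ?thesis .
qed

lemma borel_measurable_conv [measurable]: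
  assumes "g \<in> borel_measurable lborel"
  shows "conv K g \<in> borel_measurable lborel"
proof -
  have [measurable]: "g \<in> borel_measurable borel" using assms by simp
  show ?thesis unfolding conv_def by (rule lborel.borel_measurable_lebesgue_integral) measurable
qed

lemma integrable_mult_integral_abs_conv_integrand:
  assumes \<rho>: "finite_second_moment \<rho>" and g: "finite_second_moment g"
  shows "integrable lborel (\<lambda>x. \<bar>\<rho> x\<bar> * (LINT y|lborel. \<bar>K (x - y) * g y\<bar>))"
proof -
  have [measurable]: "\<rho> \<in> borel_measurable borel" "g \<in> borel_measurable borel"
    using \<rho> g by (auto simp: finite_second_moment_def)
  define m0 m2 where "m0 = (LINT y|lborel. \<bar>g y\<bar>)" and "m2 = (LINT y|lborel. (norm y)\<^sup>2 * \<bar>g y\<bar>)"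
  show ?thesis
  proof (rule Bochner_Integration.integrable_bound)
    show "integrable lborel (\<lambda>x. CK * m0 * ((norm x)\<^sup>2 * \<bar>\<rho> x\<bar>) + CK * m2 * \<bar>\<rho> x\<bar>)"
      using \<rho> integrable_abs[of lborel "\<lambda>x. (norm x)\<^sup>2 * \<rho> x"]
      unfolding finite_second_moment_def by (auto simp: abs_mult)
    show "(\<lambda>x. \<bar>\<rho> x\<bar> * (LINT y|lborel. \<bar>K (x - y) * g y\<bar>)) \<in> borel_measurable lborel"
      by measurable
    show "AE x in lborel. norm (\<bar>\<rho> x\<bar> * (LINT y|lborel. \<bar>K (x - y) * g y\<bar>))
        \<le> norm (CK * m0 * ((norm x)\<^sup>2 * \<bar>\<rho> x\<bar>) + CK * m2 * \<bar>\<rho> x\<bar>)"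
      using mult_left_mono[OF integral_abs_conv_integrand_le[OF g] abs_ge_zero[of "\<rho> _"]]
      unfolding m0_def m2_def by (intro AE_I2) (simp add: algebra_simps, meson abs_ge_self order_trans)
  qed
qed

lemma integrable_mult_conv:
  assumes \<rho>: "finite_second_moment \<rho>" and g: "finite_second_moment g"
  shows "integrable lborel (\<lambda>x. \<rho> x * conv K g x)"
proof (rule Bochner_Integration.integrable_bound[OF integrable_mult_integral_abs_conv_integrand[OF assms]])
  show "(\<lambda>x. \<rho> x * conv K g x) \<in> borel_measurable lborel"
    using \<rho> g by (auto simp: finite_second_moment_def)
  have "\<bar>conv K g x\<bar> \<le> (LINT y|lborel. \<bar>K (x - y) * g y\<bar>)" for x
    unfolding conv_def by (rule integral_abs_bound)
  then show "AE x in lborel. norm (\<rho> x * conv K g x) \<le> norm (\<bar>\<rho> x\<bar> * (LINT y|lborel. \<bar>K (x - y) * g y\<bar>))"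
    by (intro AE_I2) (simp add: abs_mult mult_left_mono)
qed

lemma integral_mult_conv_commute:
  assumes \<rho>: "finite_second_moment \<rho>" and g: "finite_second_moment g"
  shows "(LINT x|lborel. \<rho> x * conv K g x) = (LINT y|lborel. g y * conv K \<rho> y)"
proof -
  have [measurable]: "\<rho> \<in> borel_measurable borel" "g \<in> borel_measurable borel"
    using \<rho> g by (auto simp: finite_second_moment_def)
  define f where "f x y = \<rho> x * (K (x - y) * g y)" for x y
  have "integrable (lborel \<Otimes>\<^sub>M lborel) (case_prod f)"
  proof (rule lborel_pair.Fubini_integrable)
    show "case_prod f \<in> borel_measurable (lborel \<Otimes>\<^sub>M lborel)" unfolding f_def by measurable
    show "AE x in lborel. integrable lborel (\<lambda>y. case_prod f (x, y))"
      unfolding f_def using integrable_conv_integrand[OF g] by (intro AE_I2) simp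
    have "(LINT y|lborel. norm (case_prod f (x, y))) = \<bar>\<rho> x\<bar> * (LINT y|lborel. \<bar>K (x - y) * g y\<bar>)" for x
      by (simp only: f_def real_norm_def abs_mult[of "\<rho> x"] case_prod_conv integral_mult_right_zero)
    then show "integrable lborel (\<lambda>x. LINT y|lborel. norm (case_prod f (x, y)))"
      using integrable_mult_integral_abs_conv_integrand[OF assms] by simp
  qed
  from lborel_pair.Fubini_integral[OF this]
  have "(LINT y|lborel. LINT x|lborel. f x y) = (LINT x|lborel. LINT y|lborel. f x y)" .
  moreover have "f x y = g y * (K (y - x) * \<rho> x)" for x y
    using symmetric[of "y - x"] by (simp add: f_def)
  then have "(LINT x|lborel. f x y) = g y * conv K \<rho> y" for y
    by (simp only: conv_def integral_mult_right_zero)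
  moreover have "(LINT y|lborel. f x y) = \<rho> x * conv K g x" for x
    by (simp only: f_def conv_def integral_mult_right_zero)
  ultimately show ?thesis by simp
qed

lemma conv_nonneg: "(\<And>y. 0 \<le> \<rho> y) \<Longrightarrow> 0 \<le> conv K \<rho> x"
  unfolding conv_def by (intro integral_nonneg_AE) (simp add: nonneg)

lemma convex_on_conv:
  assumes "finite_second_moment \<rho>" and "\<And>y. 0 \<le> \<rho> y"
  shows "convex_on UNIV (conv K \<rho>)"
proof (rule convex_onI)
  fix t :: real and x y :: 'a assume t: "0 < t" "t < 1"
  note I = integrable_conv_integrand[OF assms(1)]
  have "conv K \<rho> ((1 - t) *\<^sub>R x + t *\<^sub>R y) = (LINT z|lborel. K ((1 - t) *\<^sub>R (x - z) + t *\<^sub>R (y - z)) * \<rho> z)"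
    unfolding conv_def by (simp add: algebra_simps)
  also have "\<dots> \<le> (LINT z|lborel. (1 - t) * (K (x - z) * \<rho> z) + t * (K (y - z) * \<rho> z))"
  proof (rule integral_mono)
    show "integrable lborel (\<lambda>z. K ((1 - t) *\<^sub>R (x - z) + t *\<^sub>R (y - z)) * \<rho> z)"
      using I[of "(1 - t) *\<^sub>R x + t *\<^sub>R y"] by (simp add: algebra_simps)
    fix z
    have "K ((1 - t) *\<^sub>R (x - z) + t *\<^sub>R (y - z)) \<le> (1 - t) * K (x - z) + t * K (y - z)"
      using t by (intro convex_onD[OF convex]) auto
    from mult_right_mono[OF this assms(2)[of z]]
    show "K ((1 - t) *\<^sub>R (x - z) + t *\<^sub>R (y - z)) * \<rho> z \<le> (1 - t) * (K (x - z) * \<rho> z) + t * (K (y - z) * \<rho> z)"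
      by (simp add: algebra_simps)
  qed (use I in simp)
  also have "\<dots> = (1 - t) * conv K \<rho> x + t * conv K \<rho> y"
    unfolding conv_def using I[of x] I[of y] by simp
  finally show "conv K \<rho> ((1 - t) *\<^sub>R x + t *\<^sub>R y) \<le> (1 - t) * conv K \<rho> x + t * conv K \<rho> y" .
qed simp

lemma continuous_on_conv: "P2dens \<rho> \<Longrightarrow> continuous_on UNIV (conv K \<rho>)"
  by (rule convex_on_continuous[OF open_UNIV convex_on_conv])
    (auto simp: P2dens_finite_second_moment P2dens_def)

lemma coercive_conv:
  assumes "P2dens \<rho>"
  shows "lam / 4 * (norm x)\<^sup>2 - lam / 2 * (LINT y|lborel. (norm y)\<^sup>2 * \<rho> y) \<le> conv K \<rho> x"
proof -
  have \<rho>: "integrable lborel \<rho>" "integral\<^sup>L lborel \<rho> = 1" "integrable lborel (\<lambda>y. (norm y)\<^sup>2 * \<rho> y)"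
    "\<And>y. 0 \<le> \<rho> y"
    using assms by (auto simp: P2dens_def)
  have "lam / 4 * (norm x)\<^sup>2 - lam / 2 * (LINT y|lborel. (norm y)\<^sup>2 * \<rho> y)
      = (LINT y|lborel. lam / 4 * (norm x)\<^sup>2 * \<rho> y - lam / 2 * ((norm y)\<^sup>2 * \<rho> y))"
    using \<rho> by simp
  also have "\<dots> \<le> conv K \<rho> x"
    unfolding conv_def
  proof (rule integral_mono)
    show "integrable lborel (\<lambda>y. K (x - y) * \<rho> y)"
      using integrable_conv_integrand assms P2dens_finite_second_moment by blast
    fix y
    have "lam / 4 * (norm x)\<^sup>2 - lam / 2 * (norm y)\<^sup>2 \<le> lam / 2 * (norm (x - y))\<^sup>2"
      using mult_left_mono[OF norm_diff_squared_le[of "x - y" "- y"], of "lam / 4"] lam_pos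
      by (simp add: algebra_simps)
    also have "\<dots> \<le> K (x - y)" by (rule lower_bound)
    finally have "lam / 4 * (norm x)\<^sup>2 - lam / 2 * (norm y)\<^sup>2 \<le> K (x - y)" .
    from mult_right_mono[OF this \<rho>(4)[of y]]
    show "lam / 4 * (norm x)\<^sup>2 * \<rho> y - lam / 2 * ((norm y)\<^sup>2 * \<rho> y) \<le> K (x - y) * \<rho> y"
      by (simp add: algebra_simps)
  qed (use \<rho> in simp)
  finally show ?thesis .
qed

lemma bounded_sublevel_conv:
  assumes "P2dens \<rho>"
  shows "bounded {x. conv K \<rho> x \<le> C}"
proof -
  define m2 where "m2 = (LINT y|lborel. (norm y)\<^sup>2 * \<rho> y)"
  have "norm x \<le> sqrt (4 / lam * (C + lam / 2 * m2))" if "conv K \<rho> x \<le> C" for x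
  proof -
    have "lam / 4 * (norm x)\<^sup>2 \<le> C + lam / 2 * m2"
      using coercive_conv[OF assms, of x] that unfolding m2_def by simp
    then have "(norm x)\<^sup>2 \<le> 4 / lam * (C + lam / 2 * m2)"
      using lam_pos by (simp add: field_simps)
    then show ?thesis by (simp add: real_le_rsqrt)
  qed
  then show ?thesis unfolding bounded_iff by blast
qed

end

section \<open>Supports of densities\<close>

lemma emeasure_lborel_open_nonzero:
  fixes U :: "'a::euclidean_space set"
  assumes "open U" and "U \<noteq> {}"
  shows "emeasure lborel U \<noteq> 0"
proof
  assume U0: "emeasure lborel U = 0"
  obtain y r where "r > 0" "ball y r \<subseteq> U"
    using assms open_contains_ball by blast
  then have "emeasure lborel (ball y r) = 0"
    using U0 assms(1) emeasure_mono[of "ball y r" U lborel] by simp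
  then show False
    using content_ball_pos[OF \<open>r > 0\<close>, of y] by (simp add: measure_def)
qed

lemma dsupp_eq_closure:
  fixes \<rho> :: "'a::euclidean_space \<Rightarrow> real"
  assumes [measurable]: "\<rho> \<in> borel_measurable lborel" and \<rho>_nonneg: "\<And>x. 0 \<le> \<rho> x"
    and U: "open U" and positive_on_U: "AE x in lborel. 0 < \<rho> x \<longleftrightarrow> x \<in> U"
  shows "dsupp \<rho> = closure U"
proof -
  have [measurable]: "U \<in> sets lborel" "ball x e \<in> sets borel" for x :: 'a and e
    using U by auto
  have charge: "0 < emeasure (density lborel \<rho>) (ball x e) \<longleftrightarrow> ball x e \<inter> U \<noteq> {}" for x e
  proof -
    have "emeasure (density lborel \<rho>) (ball x e) = (\<integral>\<^sup>+ y. ennreal (\<rho> y) * indicator (ball x e) y \<partial>lborel)"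
      by (rule emeasure_density) auto
    also have "\<dots> = 0 \<longleftrightarrow> (AE y in lborel. ennreal (\<rho> y) * indicator (ball x e) y = 0)"
      by (rule nn_integral_0_iff_AE) measurable
    also have "(AE y in lborel. ennreal (\<rho> y) * indicator (ball x e) y = 0)
        \<longleftrightarrow> (AE y in lborel. y \<notin> ball x e \<inter> U)"
      using \<rho>_nonneg
      by (intro eventually_cong[OF positive_on_U]) (auto simp: indicator_def not_less intro: antisym)
    also have "\<dots> \<longleftrightarrow> emeasure lborel (ball x e \<inter> U) = 0"
      by (rule AE_iff_measurable) auto
    also have "\<dots> \<longleftrightarrow> ball x e \<inter> U = {}"
      using emeasure_lborel_open_nonzero[of "ball x e \<inter> U"] U by auto
    finally show ?thesis by (simp add: zero_less_iff_neq_zero)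
  qed
  have "ball x e \<inter> U \<noteq> {} \<longleftrightarrow> (\<exists>y\<in>U. dist y x < e)" for x e
    by (auto simp: dist_commute set_eq_iff)
  then show ?thesis
    unfolding dsupp_def charge by (auto simp: closure_approachable)
qed

lemma convex_sublevel:
  assumes "convex_on UNIV V"
  shows "convex {x. V x \<le> C}"
proof (rule convexI)
  fix x y and u v :: real
  assume xy: "x \<in> {x. V x \<le> C}" "y \<in> {x. V x \<le> C}" and uv: "0 \<le> u" "0 \<le> v" "u + v = 1"
  have u: "u = 1 - v" using uv by simp
  have "V (u *\<^sub>R x + v *\<^sub>R y) \<le> u * V x + v * V y"
    unfolding u using uv by (intro convex_onD[OF assms]) auto
  also have "\<dots> \<le> u * C + v * C"
    using xy uv by (intro add_mono mult_left_mono) auto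
  finally show "u *\<^sub>R x + v *\<^sub>R y \<in> {x. V x \<le> C}"
    using uv by (simp add: distrib_right[symmetric])
qed

lemma closure_strict_sublevel:
  fixes V :: "'a::real_normed_vector \<Rightarrow> real"
  assumes V: "continuous_on UNIV V" "convex_on UNIV V" and z: "V z < C"
  shows "closure {x. V x < C} = {x. V x \<le> C}"
proof
  show "closure {x. V x < C} \<subseteq> {x. V x \<le> C}"
    using closed_Collect_le[OF V(1) continuous_on_const] by (intro closure_minimal) auto
  show "{x. V x \<le> C} \<subseteq> closure {x. V x < C}"
  proof
    fix x assume x: "x \<in> {x. V x \<le> C}"
    define t where "t n = inverse (real (Suc n))" for n
    have "V ((1 - t n) *\<^sub>R x + t n *\<^sub>R z) < C" for n
    proof -
      have t: "0 < t n" "t n \<le> 1" by (auto simp: t_def field_simps)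
      have "V ((1 - t n) *\<^sub>R x + t n *\<^sub>R z) \<le> (1 - t n) * V x + t n * V z"
        using t by (intro convex_onD[OF V(2)]) auto
      also have "\<dots> < (1 - t n) * C + t n * C"
        using x z t by (intro add_le_less_mono mult_left_mono mult_strict_left_mono) auto
      finally show ?thesis by (simp add: algebra_simps)
    qed
    moreover have "(\<lambda>n. (1 - t n) *\<^sub>R x + t n *\<^sub>R z) \<longlonglongrightarrow> (1 - 0) *\<^sub>R x + 0 *\<^sub>R z"
      unfolding t_def by (intro tendsto_intros LIMSEQ_inverse_real_of_nat)
    ultimately show "x \<in> closure {x. V x < C}"
      unfolding closure_sequential by (intro exI[of _ "\<lambda>n. (1 - t n) *\<^sub>R x + t n *\<^sub>R z"]) auto
  qed
qed

lemma dsupp_eq_sublevel: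
  fixes \<rho> V :: "'a::euclidean_space \<Rightarrow> real"
  assumes \<rho>: "P2dens \<rho>"
    and V: "continuous_on UNIV V" "convex_on UNIV V" "\<And>x. 0 \<le> V x" "bounded {x. V x \<le> C}"
    and positive_where_below: "AE x in lborel. 0 < \<rho> x \<longleftrightarrow> V x < C"
  shows "0 < C" "dsupp \<rho> = {x. V x \<le> C}" "compact (dsupp \<rho>)" "convex (dsupp \<rho>)"
proof -
  have \<rho>_meas: "\<rho> \<in> borel_measurable lborel" and \<rho>_nonneg: "\<And>x. 0 \<le> \<rho> x"
    and "integral\<^sup>L lborel \<rho> = 1"
    using \<rho> by (auto simp: P2dens_def)
  have "\<not> (AE x in lborel. V x \<ge> C)"
  proof
    assume "AE x in lborel. V x \<ge> C"
    then have "AE x in lborel. \<rho> x = 0"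
      using positive_where_below
      by eventually_elim (use \<rho>_nonneg in \<open>auto simp: not_less intro: antisym\<close>)
    then have "integral\<^sup>L lborel \<rho> = 0"
      by (simp add: integral_cong_AE[OF \<rho>_meas, of "\<lambda>_. 0"])
    with \<open>integral\<^sup>L lborel \<rho> = 1\<close> show False by simp
  qed
  then obtain z where z: "V z < C"
    by (metis (mono_tags, lifting) AE_I2 not_le)
  then show "0 < C" using V(3)[of z] by linarith
  have "dsupp \<rho> = closure {x. V x < C}"
    using open_Collect_less[OF V(1) continuous_on_const] positive_where_below
    by (intro dsupp_eq_closure[OF \<rho>_meas \<rho>_nonneg]) auto
  then show dsupp: "dsupp \<rho> = {x. V x \<le> C}"
    using closure_strict_sublevel[OF V(1,2) z] by simp
  show "compact (dsupp \<rho>)"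
    unfolding dsupp compact_eq_bounded_closed
    using V(4) closed_Collect_le[OF V(1) continuous_on_const] by blast
  show "convex (dsupp \<rho>)"
    unfolding dsupp using convex_sublevel[OF V(2)] .
qed

section \<open>The local energy density\<close>

lemma derivative_mono_if_convex_on_nonneg:
  fixes \<phi> d :: "real \<Rightarrow> real"
  assumes convex: "convex_on {0..} \<phi>"
    and deriv: "\<And>r. 0 \<le> r \<Longrightarrow> (\<phi> has_real_derivative d r) (at r within {0..})"
    and continuous: "continuous_on {0..} d"
    and "0 \<le> x" "x \<le> y"
  shows "d x \<le> d y"
proof -
  have interior: "d x \<le> d y" if "0 < x" "x \<le> y" for x y
  proof -
    have "x \<in> interior {0..}" "y \<in> interior {0..}" using that by auto
    then have "d x * (y - x) \<le> \<phi> y - \<phi> x" "d y * (x - y) \<le> \<phi> x - \<phi> y"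
      using that deriv by (auto intro!: convex_on_imp_above_tangent[OF convex])
    then have "0 \<le> (d y - d x) * (y - x)" by (simp add: algebra_simps)
    then show ?thesis using that by (cases "x = y") (auto simp: zero_le_mult_iff)
  qed
  text \<open>At the boundary point 0 no tangent is available; approximate from the right instead.\<close>
  have "d 0 \<le> d y" if "0 < y" for y
  proof -
    have "((\<lambda>z. d z) \<longlongrightarrow> d 0) (at_right 0)"
      using continuous by (auto simp: continuous_on_def at_within_Icc_at_right
          intro: tendsto_within_subset[of _ _ _ "{0..}"])
    moreover have "eventually (\<lambda>z. d z \<le> d y) (at_right 0)"
      using eventually_at_right_real[OF that] by eventually_elim (auto intro: interior)
    ultimately show ?thesis by (rule tendsto_upperbound) simp
  qed
  with interior assms(4,5) show ?thesis by (cases "x = 0"; cases "y = 0") auto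
qed

lemma tangent_below_if_derivative_mono:
  fixes \<phi> d :: "real \<Rightarrow> real"
  assumes deriv: "\<And>r. 0 \<le> r \<Longrightarrow> (\<phi> has_real_derivative d r) (at r within {0..})"
    and mono: "\<And>x y. 0 \<le> x \<Longrightarrow> x \<le> y \<Longrightarrow> d x \<le> d y"
    and "0 \<le> r" "0 \<le> r'"
  shows "\<phi> r' - \<phi> r \<le> d r' * (r' - r)"
proof -
  have mvt: "\<exists>z\<in>{a..b}. \<phi> b - \<phi> a = (b - a) * d z" if "0 \<le> a" "a \<le> b" for a b
  proof -
    have "\<exists>z\<in>{a..b}. \<phi> b - \<phi> a = d z * (b - a)"
    proof (rule mvt_very_simple[OF \<open>a \<le> b\<close>])
      fix z assume "a \<le> z" "z \<le> b"
      then show "(\<phi> has_derivative (\<lambda>h. d z * h)) (at z within {a..b})"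
        using deriv[of z] that unfolding has_field_derivative_def
        by (auto intro: has_derivative_subset)
    qed
    then show ?thesis by (simp add: mult.commute)
  qed
  show ?thesis
  proof (cases "r \<le> r'")
    case True
    with mvt[OF \<open>0 \<le> r\<close> True] obtain z where "z \<in> {r..r'}" "\<phi> r' - \<phi> r = (r' - r) * d z" by blast
    moreover have "(r' - r) * d z \<le> (r' - r) * d r'"
      using \<open>z \<in> {r..r'}\<close> True \<open>0 \<le> r\<close> by (intro mult_left_mono mono) auto
    ultimately show ?thesis by (simp add: mult.commute)
  next
    case False
    with mvt[OF \<open>0 \<le> r'\<close>, of r] obtain z where "z \<in> {r'..r}" "\<phi> r - \<phi> r' = (r - r') * d z" by auto
    moreover have "(r - r') * d r' \<le> (r - r') * d z"
      using \<open>z \<in> {r'..r}\<close> False \<open>0 \<le> r'\<close> by (intro mult_left_mono mono) auto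
    ultimately show ?thesis by (simp add: algebra_simps)
  qed
qed

lemma F_hyp_D:
  assumes "F_hyp F F' F''"
  shows F_hyp_deriv: "\<And>r. 0 \<le> r \<Longrightarrow> (F has_real_derivative F' r) (at r within {0..})"
    and F_hyp_deriv2: "\<And>r. 0 \<le> r \<Longrightarrow> (F' has_real_derivative F'' r) (at r within {0..})"
    and F_hyp_convex: "\<And>r. 0 < r \<Longrightarrow> 0 < F'' r"
    and F_hyp_zero: "F 0 = 0" "F' 0 = 0"
  using assms unfolding F_hyp_def by auto

lemma F_hyp_continuous:
  assumes "F_hyp F F' F''"
  shows "continuous_on {0..} F" "continuous_on {0..} F'"
  using F_hyp_deriv[OF assms] F_hyp_deriv2[OF assms]
  by (auto intro!: has_derivative_continuous_on simp: has_field_derivative_def)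

lemma F_hyp_derivative_strict_mono:
  assumes F: "F_hyp F F' F''" and "0 \<le> x" "x < y"
  shows "F' x < F' y"
proof -
  have "\<exists>z\<in>{x<..<y}. F' y - F' x = F'' z * (y - x)"
  proof (rule mvt_simple[OF \<open>x < y\<close>])
    fix z assume "x \<le> z" "z \<le> y"
    then show "(F' has_derivative (\<lambda>h. F'' z * h)) (at z within {x..y})"
      using F_hyp_deriv2[OF F, of z] \<open>0 \<le> x\<close> unfolding has_field_derivative_def
      by (auto intro: has_derivative_subset)
  qed
  then obtain z where "x < z" "F' y - F' x = F'' z * (y - x)" by auto
  moreover have "0 < F'' z * (y - x)"
    using F_hyp_convex[OF F] \<open>0 \<le> x\<close> \<open>x < z\<close> \<open>x < y\<close> by simp
  ultimately show ?thesis by linarith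
qed

text \<open>For 0 < \<epsilon> \<le> \<epsilon>0, F' + \<epsilon> Hr is a convex combination of the strictly increasing F'
  and the nondecreasing derivative of the convex function F + 2 \<epsilon>0 H.\<close>
lemma first_variation_strict_mono:
  fixes F F' F'' :: "real \<Rightarrow> real" and H Hr :: "real \<times> real \<Rightarrow> real"
  assumes F: "F_hyp F F' F''"
    and H_deriv: "\<And>r s. 0 \<le> r \<Longrightarrow> 0 \<le> s \<Longrightarrow> ((\<lambda>r. H (r, s)) has_real_derivative Hr (r, s)) (at r within {0..})"
    and Hr: "continuous_on quadrant Hr"
    and convex: "\<And>s. 0 \<le> s \<Longrightarrow> convex_on {0..} (\<lambda>r. F r + 2 * \<epsilon>0 * H (r, s))"
    and \<epsilon>: "0 < \<epsilon>" "\<epsilon> \<le> \<epsilon>0"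
    and "0 \<le> r" "r < r'" "0 \<le> s"
  shows "F' r + \<epsilon> * Hr (r, s) < F' r' + \<epsilon> * Hr (r', s)"
proof -
  have "F' r + 2 * \<epsilon>0 * Hr (r, s) \<le> F' r' + 2 * \<epsilon>0 * Hr (r', s)"
  proof (rule derivative_mono_if_convex_on_nonneg[OF convex[OF \<open>0 \<le> s\<close>],
        where d="\<lambda>r. F' r + 2 * \<epsilon>0 * Hr (r, s)"])
    show "((\<lambda>r. F r + 2 * \<epsilon>0 * H (r, s)) has_real_derivative F' x + 2 * \<epsilon>0 * Hr (x, s)) (at x within {0..})"
      if "0 \<le> x" for x
      by (intro DERIV_add DERIV_cmult F_hyp_deriv[OF F] H_deriv that \<open>0 \<le> s\<close>)
    have "continuous_on {0..} (\<lambda>r. Hr (r, s))"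
      by (rule continuous_on_compose2[OF Hr])
        (use \<open>0 \<le> s\<close> in \<open>auto simp: quadrant_def intro!: continuous_intros\<close>)
    then show "continuous_on {0..} (\<lambda>r. F' r + 2 * \<epsilon>0 * Hr (r, s))"
      by (intro continuous_intros F_hyp_continuous(2)[OF F])
  qed (use \<open>0 \<le> r\<close> \<open>r < r'\<close> in auto)
  moreover define \<theta> where "\<theta> = \<epsilon> / (2 * \<epsilon>0)"
  moreover have "0 < \<theta>" "\<theta> < 1" using \<epsilon> by (auto simp: \<theta>_def field_simps)
  moreover have "F' x + \<epsilon> * Hr (x, s) = (1 - \<theta>) * F' x + \<theta> * (F' x + 2 * \<epsilon>0 * Hr (x, s))" for x
    using \<epsilon> by (simp add: \<theta>_def field_simps)
  ultimately show ?thesis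
    using F_hyp_derivative_strict_mono[OF F \<open>0 \<le> r\<close> \<open>r < r'\<close>]
    by (smt (verit) mult_left_mono mult_strict_left_mono)
qed

lemma first_variation_properties:
  fixes F F' F'' :: "real \<Rightarrow> real" and H Hr :: "real \<times> real \<Rightarrow> real"
  assumes F: "F_hyp F F' F''"
    and H_deriv: "\<And>r s. 0 \<le> r \<Longrightarrow> 0 \<le> s \<Longrightarrow> ((\<lambda>r. H (r, s)) has_real_derivative Hr (r, s)) (at r within {0..})"
    and Hr: "continuous_on quadrant Hr" and Hr_zero: "\<And>s. 0 \<le> s \<Longrightarrow> Hr (0, s) = 0"
    and convex: "\<And>s. 0 \<le> s \<Longrightarrow> convex_on {0..} (\<lambda>r. F r + 2 * \<epsilon>0 * H (r, s))"
    and \<epsilon>: "0 < \<epsilon>" "\<epsilon> \<le> \<epsilon>0"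
  shows "continuous_on quadrant (\<lambda>p. F' (fst p) + \<epsilon> * Hr p)"
    and "\<And>s. 0 \<le> s \<Longrightarrow> F' 0 + \<epsilon> * Hr (0, s) = 0"
    and "\<And>r s. 0 < r \<Longrightarrow> 0 \<le> s \<Longrightarrow> 0 < F' r + \<epsilon> * Hr (r, s)"
    and "\<And>r r' s. 0 \<le> r \<Longrightarrow> 0 \<le> r' \<Longrightarrow> 0 \<le> s \<Longrightarrow>
      (F r' + \<epsilon> * H (r', s)) - (F r + \<epsilon> * H (r, s)) \<le> (F' r' + \<epsilon> * Hr (r', s)) * (r' - r)"
proof -
  note strict = first_variation_strict_mono[OF F H_deriv Hr convex \<epsilon>]
  show "continuous_on quadrant (\<lambda>p. F' (fst p) + \<epsilon> * Hr p)"
    by (intro continuous_intros Hr continuous_on_compose2[OF F_hyp_continuous(2)[OF F]])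
      (auto simp: quadrant_def)
  show zero: "F' 0 + \<epsilon> * Hr (0, s) = 0" if "0 \<le> s" for s
    using F_hyp_zero(2)[OF F] Hr_zero[OF that] by simp
  show "0 < F' r + \<epsilon> * Hr (r, s)" if "0 < r" "0 \<le> s" for r s
    using strict[of 0 r s] zero[of s] that by simp
  show "(F r' + \<epsilon> * H (r', s)) - (F r + \<epsilon> * H (r, s)) \<le> (F' r' + \<epsilon> * Hr (r', s)) * (r' - r)"
    if "0 \<le> r" "0 \<le> r'" "0 \<le> s" for r r' s
  proof (rule tangent_below_if_derivative_mono[OF _ _ that(1,2)])
    show "((\<lambda>r. F r + \<epsilon> * H (r, s)) has_real_derivative F' r + \<epsilon> * Hr (r, s)) (at r within {0..})"
      if "0 \<le> r" for r
      by (intro DERIV_add DERIV_cmult F_hyp_deriv[OF F] H_deriv that \<open>0 \<le> s\<close>)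
    show "F' x + \<epsilon> * Hr (x, s) \<le> F' y + \<epsilon> * Hr (y, s)" if "0 \<le> x" "x \<le> y" for x y
      using strict[of x y s] that \<open>0 \<le> s\<close> by (cases "x = y") auto
  qed
qed

lemma h_hyp_D:
  assumes "h_hyp h h1 h2 h11 h12 h21 h22"
  shows h_hyp_continuous: "continuous_on quadrant h" "continuous_on quadrant h1" "continuous_on quadrant h2"
    and h_hyp_partial1: "\<And>r s. 0 \<le> r \<Longrightarrow> 0 \<le> s \<Longrightarrow>
      ((\<lambda>r. h (r, s)) has_real_derivative h1 (r, s)) (at r within {0..})"
    and h_hyp_partial2: "\<And>r s. 0 \<le> r \<Longrightarrow> 0 \<le> s \<Longrightarrow>
      ((\<lambda>r. h (s, r)) has_real_derivative h2 (s, r)) (at r within {0..})"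
    and h_hyp_zero: "h (0, 0) = 0" "\<And>s. 0 \<le> s \<Longrightarrow> h1 (0, s) = 0" "\<And>s. 0 \<le> s \<Longrightarrow> h2 (s, 0) = 0"
proof -
  have d: "\<And>p. p \<in> quadrant \<Longrightarrow> (h has_derivative (\<lambda>(a, b). h1 p * a + h2 p * b)) (at p within quadrant)"
    and d1: "\<And>p. p \<in> quadrant \<Longrightarrow> (h1 has_derivative (\<lambda>(a, b). h11 p * a + h12 p * b)) (at p within quadrant)"
    and d2: "\<And>p. p \<in> quadrant \<Longrightarrow> (h2 has_derivative (\<lambda>(a, b). h21 p * a + h22 p * b)) (at p within quadrant)"
    and axes: "\<And>p. p \<in> quadrant \<Longrightarrow> fst p = 0 \<or> snd p = 0 \<Longrightarrow> h p = 0 \<and> h1 p = 0 \<and> h2 p = 0"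
    using assms unfolding h_hyp_def by auto
  show "continuous_on quadrant h" "continuous_on quadrant h1" "continuous_on quadrant h2"
    by (intro has_derivative_continuous_on; use d d1 d2 in blast)+
  show "h (0, 0) = 0" using axes[of "(0, 0)"] by (simp add: quadrant_def)
  show "h1 (0, s) = 0" if "0 \<le> s" for s using axes[of "(0, s)"] that by (simp add: quadrant_def)
  show "h2 (s, 0) = 0" if "0 \<le> s" for s using axes[of "(s, 0)"] that by (simp add: quadrant_def)
  show "((\<lambda>r. h (r, s)) has_real_derivative h1 (r, s)) (at r within {0..})"
    if "0 \<le> r" "0 \<le> s" for r s
  proof -
    have "((\<lambda>r. (r, s)) has_derivative (\<lambda>t. (t, 0))) (at r within {0..})"
      by (auto intro!: derivative_eq_intros)
    from has_derivative_in_compose2[OF d _ _ this] that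
    show ?thesis unfolding has_field_derivative_def
      by (rule_tac has_derivative_eq_rhs) (auto simp: quadrant_def fun_eq_iff)
  qed
  show "((\<lambda>r. h (s, r)) has_real_derivative h2 (s, r)) (at r within {0..})"
    if "0 \<le> r" "0 \<le> s" for r s
  proof -
    have "((\<lambda>r. (s, r)) has_derivative (\<lambda>t. (0, t))) (at r within {0..})"
      by (auto intro!: derivative_eq_intros)
    from has_derivative_in_compose2[OF d _ _ this] that
    show ?thesis unfolding has_field_derivative_def
      by (rule_tac has_derivative_eq_rhs) (auto simp: quadrant_def fun_eq_iff)
  qed
qed

lemma continuous_on_quadrant_swap:
  "continuous_on quadrant f \<Longrightarrow> continuous_on quadrant (\<lambda>p. f (snd p, fst p))"
  by (erule continuous_on_compose2) (auto intro!: continuous_intros simp: quadrant_def)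

lemma convex_on_affine_slice:
  assumes f: "convex_on S f" and into: "\<And>r. 0 \<le> r \<Longrightarrow> \<iota> r \<in> S"
    and affine: "\<And>t x y. \<iota> ((1 - t) * x + t * y) = (1 - t) *\<^sub>R \<iota> x + t *\<^sub>R \<iota> y"
  shows "convex_on {0..} (\<lambda>r. f (\<iota> r))"
proof (rule convex_onI)
  fix t x y :: real assume "0 < t" "t < 1" "x \<in> {0..}" "y \<in> {0..}"
  then show "f (\<iota> ((1 - t) *\<^sub>R x + t *\<^sub>R y)) \<le> (1 - t) * f (\<iota> x) + t * f (\<iota> y)"
    using into by (auto simp: affine intro!: convex_onD[OF f])
qed simp

lemma convex_on_quadrant_separable_slices:
  assumes convex: "convex_on quadrant (\<lambda>r. F1 (fst r) + F2 (snd r) + c * h r)" and "0 \<le> s"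
  shows "convex_on {0..} (\<lambda>r. F1 r + c * h (r, s))" "convex_on {0..} (\<lambda>r. F2 r + c * h (s, r))"
proof -
  have "convex_on {0..} (\<lambda>r. F1 (fst (r, s)) + F2 (snd (r, s)) + c * h (r, s))"
    "convex_on {0..} (\<lambda>r. F1 (fst (s, r)) + F2 (snd (s, r)) + c * h (s, r))"
    by (rule convex_on_affine_slice[OF convex]; use \<open>0 \<le> s\<close> in \<open>auto simp: quadrant_def algebra_simps\<close>)+
  note shifted = this[THEN convex_on_add, OF convex_on_const[THEN iffD2, OF convex_real_interval(1)]]
  show "convex_on {0..} (\<lambda>r. F1 r + c * h (r, s))"
    using shifted(1)[of "- F2 s"] by (simp add: algebra_simps)
  show "convex_on {0..} (\<lambda>r. F2 r + c * h (s, r))"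
    using shifted(2)[of "- F1 s"] by (simp add: algebra_simps)
qed

section \<open>Stability under mass transfer\<close>

lemma AE_le_of_AE_le_plus_inverse:
  fixes f :: "'a \<Rightarrow> real"
  assumes "\<And>k. AE x in M. P x \<longrightarrow> f x \<le> c + inverse (real (Suc k))"
  shows "AE x in M. P x \<longrightarrow> f x \<le> c"
proof -
  from assms have "AE x in M. \<forall>k. P x \<longrightarrow> f x \<le> c + inverse (real (Suc k))"
    by (intro AE_all_countable[THEN iffD2] allI assms)
  then show ?thesis
  proof (rule AE_mp, intro AE_I2 impI)
    fix x assume x: "\<forall>k. P x \<longrightarrow> f x \<le> c + inverse (real (Suc k))" and "P x"
    show "f x \<le> c"
    proof (rule ccontr)
      assume "\<not> f x \<le> c"
      then obtain k where "inverse (real (Suc k)) < f x - c"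
        using reals_Archimedean[of "f x - c"] by auto
      moreover have "f x \<le> c + inverse (real (Suc k))" using x \<open>P x\<close> by blast
      ultimately show False by linarith
    qed
  qed
qed

lemma bdd_above_AE_lower_bounds:
  fixes \<Phi> :: "'a \<Rightarrow> real"
  assumes "emeasure M (space M) \<noteq> 0"
  shows "bdd_above {c. AE x in M. c \<le> \<Phi> x}"
proof -
  have "\<not> (AE x in M. False)"
    using assms by (simp add: eventually_False ae_filter_eq_bot_iff)
  moreover have "AE x in M. False" if "\<forall>N::nat. AE x in M. real N \<le> \<Phi> x"
    using that unfolding AE_all_countable[symmetric]
  proof (rule eventually_mono)
    fix x assume "\<forall>N::nat. real N \<le> \<Phi> x"
    moreover obtain N :: nat where "\<Phi> x < real N" using reals_Archimedean2 by blast
    ultimately show False by (meson not_le)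
  qed
  ultimately obtain N :: nat where N: "\<not> (AE x in M. real N \<le> \<Phi> x)"
    by blast
  show ?thesis
  proof (rule bdd_aboveI)
    fix c assume "c \<in> {c. AE x in M. c \<le> \<Phi> x}"
    then have c: "AE x in M. c \<le> \<Phi> x" by simp
    show "c \<le> real N"
    proof (rule ccontr)
      assume "\<not> c \<le> real N"
      with c have "AE x in M. real N \<le> \<Phi> x" by (auto elim: eventually_mono)
      with N show False ..
    qed
  qed
qed

text \<open>The Lagrange multiplier is the essential infimum of \<Phi>; the dichotomy says that \<Phi> cannot
  take values both clearly above (where P holds) and clearly below any level.\<close>
lemma constant_from_dichotomy:
  fixes \<Phi> :: "'a \<Rightarrow> real"
  assumes dichotomy: "\<And>a b. b < a \<Longrightarrow> (AE x in M. b \<le> \<Phi> x) \<or> (AE x in M. P x \<longrightarrow> \<Phi> x \<le> a)"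
    and bounded_below: "AE x in M. lb \<le> \<Phi> x"
    and nontrivial: "emeasure M (space M) \<noteq> 0"
  shows "\<exists>C. (AE x in M. C \<le> \<Phi> x) \<and> (AE x in M. P x \<longrightarrow> \<Phi> x \<le> C)"
proof -
  define S where "S = {c. AE x in M. c \<le> \<Phi> x}"
  have bdd: "bdd_above S"
    unfolding S_def by (rule bdd_above_AE_lower_bounds[OF nontrivial])
  have "lb \<in> S" using bounded_below unfolding S_def by simp
  define C where "C = Sup S"
  have "AE x in M. C \<le> \<Phi> x"
  proof -
    have "AE x in M. True \<longrightarrow> - \<Phi> x \<le> - C + inverse (real (Suc k))" for k
    proof -
      obtain c where "c \<in> S" "C - inverse (real (Suc k)) < c"
        using less_cSup_iff[OF _ bdd, of "C - inverse (real (Suc k))"] \<open>lb \<in> S\<close>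
        unfolding C_def by auto
      then show ?thesis unfolding S_def by (auto elim: eventually_mono)
    qed
    from AE_le_of_AE_le_plus_inverse[OF this] show ?thesis by simp
  qed
  moreover have "AE x in M. P x \<longrightarrow> \<Phi> x \<le> C + inverse (real (Suc k))" for k
  proof -
    define b where "b = C + inverse (real (Suc k)) / 2"
    have "b \<notin> S"
      using cSup_upper[OF _ bdd, of b] unfolding C_def b_def by auto
    then show ?thesis
      using dichotomy[of b "C + inverse (real (Suc k))"] unfolding S_def b_def by auto
  qed
  then have "AE x in M. P x \<longrightarrow> \<Phi> x \<le> C"
    by (rule AE_le_of_AE_le_plus_inverse)
  ultimately show ?thesis by blast
qed

text \<open>First-order optimality of \<rho> for \<integral> \<Psi>(\<rho>, q) + \<rho> W with q fixed: no bounded, mass-preserving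
  perturbation g keeping \<rho> + g \<ge> 0 decreases it. The bound M on \<rho>, q and |x| on the support of g
  only serves to make the energy difference integrable.\<close>
definition stable_under_perturbations ::
    "(real \<Rightarrow> real \<Rightarrow> real) \<Rightarrow> ('a::euclidean_space \<Rightarrow> real) \<Rightarrow> ('a \<Rightarrow> real) \<Rightarrow> ('a \<Rightarrow> real) \<Rightarrow> bool" where
  "stable_under_perturbations \<Psi> W q \<rho> \<longleftrightarrow>
     (\<forall>g M. g \<in> borel_measurable lborel \<longrightarrow> (\<forall>x. \<bar>g x\<bar> \<le> M) \<longrightarrow>
        (\<forall>x. g x \<noteq> 0 \<longrightarrow> \<rho> x \<le> M \<and> q x \<le> M \<and> norm x \<le> M) \<longrightarrow>
        (\<forall>x. 0 \<le> \<rho> x + g x) \<longrightarrow> integral\<^sup>L lborel g = 0 \<longrightarrow>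
        0 \<le> (LINT x|lborel. \<Psi> (\<rho> x + g x) (q x) - \<Psi> (\<rho> x) (q x) + g x * W x))"

lemma borel_measurable_on_quadrant:
  fixes G :: "real \<Rightarrow> real \<Rightarrow> real"
  assumes G: "continuous_on quadrant (\<lambda>p. G (fst p) (snd p))"
    and [measurable]: "r \<in> borel_measurable M" "s \<in> borel_measurable M"
    and "\<And>x. 0 \<le> r x" "\<And>x. 0 \<le> s x"
  shows "(\<lambda>x. G (r x) (s x)) \<in> borel_measurable M"
proof -
  let ?clip = "\<lambda>p::real \<times> real. (max (fst p) 0, max (snd p) 0)"
  have "continuous_on UNIV ((\<lambda>p. G (fst p) (snd p)) \<circ> ?clip)"
    by (intro continuous_on_compose continuous_intros continuous_on_subset[OF G])
      (auto simp: quadrant_def)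
  then have "(\<lambda>x. ((\<lambda>p. G (fst p) (snd p)) \<circ> ?clip) (r x, s x)) \<in> borel_measurable M"
    by (intro borel_measurable_continuous_on[where f="(\<lambda>p. G (fst p) (snd p)) \<circ> ?clip"]) auto
  then show ?thesis
    using assms(4,5) by (simp add: max_absorb1)
qed

lemma integrable_perturbation_integrand:
  fixes \<Psi> :: "real \<Rightarrow> real \<Rightarrow> real" and \<rho> q W g :: "'a::euclidean_space \<Rightarrow> real"
  assumes \<Psi>: "continuous_on quadrant (\<lambda>p. \<Psi> (fst p) (snd p))" and W: "continuous_on UNIV W"
    and [measurable]: "\<rho> \<in> borel_measurable lborel" "q \<in> borel_measurable lborel"
      "g \<in> borel_measurable lborel"
    and \<rho>_nonneg: "\<And>x. 0 \<le> \<rho> x" and q_nonneg: "\<And>x. 0 \<le> q x" and perturbed_nonneg: "\<And>x. 0 \<le> \<rho> x + g x"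
    and g_bound: "\<And>x. \<bar>g x\<bar> \<le> M"
    and g_support: "\<And>x. g x \<noteq> 0 \<Longrightarrow> \<rho> x \<le> M \<and> q x \<le> M \<and> norm x \<le> M"
  shows "integrable lborel (\<lambda>x. \<Psi> (\<rho> x + g x) (q x) - \<Psi> (\<rho> x) (q x) + g x * W x)"
proof -
  have [measurable]: "W \<in> borel_measurable lborel"
    using borel_measurable_continuous_onI[OF W] by simp
  have "continuous_on ({0..M + M} \<times> {0..M}) (\<lambda>p. \<Psi> (fst p) (snd p))"
    by (rule continuous_on_subset[OF \<Psi>]) (auto simp: quadrant_def)
  then obtain c\<Psi> where c\<Psi>: "\<And>p. p \<in> {0..M + M} \<times> {0..M} \<Longrightarrow> norm (\<Psi> (fst p) (snd p)) \<le> c\<Psi>"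
    using continuous_on_compact_bound[OF compact_Times[OF compact_Icc compact_Icc]] by blast
  obtain cW where cW: "\<And>x. x \<in> cball 0 M \<Longrightarrow> norm (W x) \<le> cW"
    using continuous_on_compact_bound[OF compact_cball continuous_on_subset[OF W]] by blast
  show ?thesis
  proof (rule integrable_bounded_support[where c="c\<Psi> + c\<Psi> + M * cW" and R=M])
    show "(\<lambda>x. \<Psi> (\<rho> x + g x) (q x) - \<Psi> (\<rho> x) (q x) + g x * W x) \<in> borel_measurable lborel"
      using borel_measurable_on_quadrant[OF \<Psi>, of "\<lambda>x. \<rho> x + g x" lborel q]
        borel_measurable_on_quadrant[OF \<Psi>, of \<rho> lborel q] perturbed_nonneg \<rho>_nonneg q_nonneg
      by measurable
    fix x
    show "\<bar>\<Psi> (\<rho> x + g x) (q x) - \<Psi> (\<rho> x) (q x) + g x * W x\<bar> \<le> c\<Psi> + c\<Psi> + M * cW"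
    proof (cases "g x = 0")
      case True
      then show ?thesis
        using c\<Psi>[of "(0, 0)"] cW[of 0] g_bound[of x] by (auto intro: add_nonneg_nonneg)
    next
      case False
      with g_support have x: "\<rho> x \<le> M" "q x \<le> M" "norm x \<le> M" by auto
      then have "\<bar>\<Psi> (\<rho> x + g x) (q x)\<bar> \<le> c\<Psi>" "\<bar>\<Psi> (\<rho> x) (q x)\<bar> \<le> c\<Psi>"
        using c\<Psi>[of "(\<rho> x + g x, q x)"] c\<Psi>[of "(\<rho> x, q x)"] g_bound[of x]
          perturbed_nonneg[of x] \<rho>_nonneg[of x] q_nonneg[of x] by auto
      moreover have "\<bar>g x * W x\<bar> \<le> M * cW"
        using g_bound[of x] cW[of x] x by (simp add: abs_mult mult_mono)
      ultimately show ?thesis by linarith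
    qed
    show "\<Psi> (\<rho> x + g x) (q x) - \<Psi> (\<rho> x) (q x) + g x * W x \<noteq> 0 \<Longrightarrow> norm x \<le> M"
      using g_support[of x] by (cases "g x = 0") auto
  qed
qed

lemma uniformly_continuous_on_quadrant_box:
  fixes D :: "real \<Rightarrow> real \<Rightarrow> real"
  assumes "continuous_on quadrant (\<lambda>p. D (fst p) (snd p))" and "0 < \<eta>"
  obtains \<delta> where "0 < \<delta>"
    "\<And>r r' s. r \<in> {0..R} \<Longrightarrow> r' \<in> {0..R} \<Longrightarrow> s \<in> {0..S} \<Longrightarrow> \<bar>r' - r\<bar> < \<delta> \<Longrightarrow>
      \<bar>D r' s - D r s\<bar> < \<eta>"
proof -
  have "continuous_on ({0..R} \<times> {0..S}) (\<lambda>p. D (fst p) (snd p))"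
    by (rule continuous_on_subset[OF assms(1)]) (auto simp: quadrant_def)
  then have "uniformly_continuous_on ({0..R} \<times> {0..S}) (\<lambda>p. D (fst p) (snd p))"
    by (intro compact_uniformly_continuous compact_Times compact_Icc)
  then obtain \<delta> where "0 < \<delta>" and \<delta>: "\<And>p p'. p \<in> {0..R} \<times> {0..S} \<Longrightarrow> p' \<in> {0..R} \<times> {0..S} \<Longrightarrow>
      dist p' p < \<delta> \<Longrightarrow> dist (D (fst p') (snd p')) (D (fst p) (snd p)) < \<eta>"
    using \<open>0 < \<eta>\<close> unfolding uniformly_continuous_on_def by metis
  show ?thesis
    using \<delta>[of "(r, s)" "(r', s)" for r r' s]
    by (intro that[OF \<open>0 < \<delta>\<close>]) (auto simp: dist_Pair_Pair dist_real_def)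
qed

lemma emeasure_finite_of_measure_pos: "0 < measure M A \<Longrightarrow> emeasure M A < \<infinity>"
  by (auto simp: measure_def enn2real_positive_iff)

lemma perturbation_gain_le:
  fixes \<Psi> D :: "real \<Rightarrow> real \<Rightarrow> real"
  assumes tangent: "\<Psi> (r + h) s - \<Psi> r s \<le> D (r + h) s * h"
    and close: "\<bar>D (r + h) s - D r s\<bar> \<le> \<eta>"
  shows "\<Psi> (r + h) s - \<Psi> r s + h * w \<le> h * (D r s + w) + \<eta> * \<bar>h\<bar>"
proof -
  have "(D (r + h) s - D r s) * h \<le> \<eta> * \<bar>h\<bar>"
    using mult_right_mono[OF close abs_ge_zero[of h]] abs_ge_self[of "(D (r + h) s - D r s) * h"]
    by (simp add: abs_mult)
  with tangent show ?thesis by (simp add: algebra_simps)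
qed

definition mass_transfer :: "'a set \<Rightarrow> 'a set \<Rightarrow> real \<Rightarrow> real \<Rightarrow> 'a \<Rightarrow> real" where
  "mass_transfer A B sA sB x = sB * indicator B x - sA * indicator A x"

lemma mass_transfer_simps:
  assumes "A \<inter> B = {}"
  shows "x \<in> A \<Longrightarrow> mass_transfer A B sA sB x = - sA" "x \<in> B \<Longrightarrow> mass_transfer A B sA sB x = sB"
    "x \<notin> A \<Longrightarrow> x \<notin> B \<Longrightarrow> mass_transfer A B sA sB x = 0"
  using assms by (auto simp: mass_transfer_def indicator_def)

lemma stable_mass_transfer:
  fixes \<rho> q W :: "'a::euclidean_space \<Rightarrow> real" and \<Psi> :: "real \<Rightarrow> real \<Rightarrow> real"
  assumes stable: "stable_under_perturbations \<Psi> W q \<rho>"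
    and [measurable]: "\<rho> \<in> borel_measurable lborel" "q \<in> borel_measurable lborel"
    and \<rho>_nonneg: "\<And>x. 0 \<le> \<rho> x" and q_nonneg: "\<And>x. 0 \<le> q x" and W: "continuous_on UNIV W"
    and \<Psi>: "continuous_on quadrant (\<lambda>p. \<Psi> (fst p) (snd p))"
    and AB: "A \<in> sets lborel" "B \<in> sets lborel" "A \<inter> B = {}" "0 < measure lborel A" "0 < measure lborel B"
    and bounded: "\<And>x. x \<in> A \<union> B \<Longrightarrow> \<rho> x \<le> M \<and> q x \<le> M \<and> norm x \<le> M"
    and s: "0 \<le> sA" "0 \<le> sB" "\<And>x. x \<in> A \<Longrightarrow> sA \<le> \<rho> x"
    and balance: "sA * measure lborel A = sB * measure lborel B"
  defines "g \<equiv> mass_transfer A B sA sB"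
  shows "integrable lborel (\<lambda>x. \<Psi> (\<rho> x + g x) (q x) - \<Psi> (\<rho> x) (q x) + g x * W x)"
    and "0 \<le> (LINT x|lborel. \<Psi> (\<rho> x + g x) (q x) - \<Psi> (\<rho> x) (q x) + g x * W x)"
proof -
  note g = mass_transfer_simps[OF AB(3), of _ sA sB, folded g_def]
  have [measurable]: "g \<in> borel_measurable lborel"
    unfolding g_def mass_transfer_def[abs_def] using AB(1,2) by measurable
  have "0 \<le> M"
    using AB(4) bounded by (metis UnI1 equals0I measure_empty norm_ge_zero order_less_irrefl order_trans)
  have g_bound: "\<bar>g x\<bar> \<le> M + sA + sB" and perturbed_nonneg: "0 \<le> \<rho> x + g x" for x
    using g s \<rho>_nonneg[of x] \<open>0 \<le> M\<close> by (cases "x \<in> A"; cases "x \<in> B"; force)+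
  have g_support: "\<rho> x \<le> M + sA + sB \<and> q x \<le> M + sA + sB \<and> norm x \<le> M + sA + sB"
    if "g x \<noteq> 0" for x
    using that g bounded[of x] s by (cases "x \<in> A"; cases "x \<in> B"; force)
  show "integrable lborel (\<lambda>x. \<Psi> (\<rho> x + g x) (q x) - \<Psi> (\<rho> x) (q x) + g x * W x)"
    by (rule integrable_perturbation_integrand[OF \<Psi> W _ _ _ \<rho>_nonneg q_nonneg
          perturbed_nonneg g_bound g_support]) simp_all
  have "integrable lborel (indicator A :: 'a \<Rightarrow> real)" "integrable lborel (indicator B :: 'a \<Rightarrow> real)"
    using AB by (auto intro!: integrable_real_indicator emeasure_finite_of_measure_pos)
  then have "integral\<^sup>L lborel g = 0"
    using balance by (simp add: g_def mass_transfer_def[abs_def])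
  then show "0 \<le> (LINT x|lborel. \<Psi> (\<rho> x + g x) (q x) - \<Psi> (\<rho> x) (q x) + g x * W x)"
    using g_bound g_support perturbed_nonneg
    by (intro stable[unfolded stable_under_perturbations_def, rule_format]) auto
qed

lemma mass_transfer_gain_le:
  fixes \<rho> q W :: "'a \<Rightarrow> real" and \<Psi> D :: "real \<Rightarrow> real \<Rightarrow> real"
  assumes \<rho>_nonneg: "\<And>x. 0 \<le> \<rho> x" and q_nonneg: "\<And>x. 0 \<le> q x"
    and tangent: "\<And>r r' s. 0 \<le> r \<Longrightarrow> 0 \<le> r' \<Longrightarrow> 0 \<le> s \<Longrightarrow> \<Psi> r' s - \<Psi> r s \<le> D r' s * (r' - r)"
    and close: "\<And>r r' s. r \<in> {0..M + 1} \<Longrightarrow> r' \<in> {0..M + 1} \<Longrightarrow> s \<in> {0..M} \<Longrightarrow>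
      \<bar>r' - r\<bar> < \<delta> \<Longrightarrow> \<bar>D r' s - D r s\<bar> < \<eta>"
    and "A \<inter> B = {}"
    and A: "\<And>x. x \<in> A \<Longrightarrow> sA \<le> \<rho> x \<and> \<rho> x \<le> M \<and> q x \<le> M \<and> a < D (\<rho> x) (q x) + W x"
    and B: "\<And>x. x \<in> B \<Longrightarrow> \<rho> x \<le> M \<and> q x \<le> M \<and> D (\<rho> x) (q x) + W x < b"
    and sA: "0 \<le> sA" "sA < \<delta>" and sB: "0 \<le> sB" "sB \<le> 1" "sB < \<delta>"
  defines "g \<equiv> mass_transfer A B sA sB"
  shows "\<Psi> (\<rho> x + g x) (q x) - \<Psi> (\<rho> x) (q x) + g x * W x
    \<le> (b + \<eta>) * sB * indicator B x - (a - \<eta>) * sA * indicator A x"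
proof -
  note g = mass_transfer_simps[OF \<open>A \<inter> B = {}\<close>, of x sA sB, folded g_def]
  have first_order: "\<Psi> (\<rho> x + g x) (q x) - \<Psi> (\<rho> x) (q x) + g x * W x
      \<le> g x * (D (\<rho> x) (q x) + W x) + \<eta> * \<bar>g x\<bar>"
    if "0 \<le> \<rho> x + g x" "\<rho> x + g x \<le> M + 1" "\<rho> x \<le> M" "q x \<le> M" "\<bar>g x\<bar> < \<delta>"
  proof (rule perturbation_gain_le[where \<Psi>=\<Psi> and D=D])
    show "\<Psi> (\<rho> x + g x) (q x) - \<Psi> (\<rho> x) (q x) \<le> D (\<rho> x + g x) (q x) * g x"
      using tangent[OF \<rho>_nonneg[of x] that(1) q_nonneg[of x]] by simp
    show "\<bar>D (\<rho> x + g x) (q x) - D (\<rho> x) (q x)\<bar> \<le> \<eta>"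
      using close[of "\<rho> x" "\<rho> x + g x" "q x"] that \<rho>_nonneg[of x] q_nonneg[of x] by simp
  qed
  consider "x \<in> A" | "x \<in> B" | "x \<notin> A" "x \<notin> B" by blast
  then show ?thesis
  proof cases
    case 1
    with A[OF 1] g sA first_order have "\<Psi> (\<rho> x + g x) (q x) - \<Psi> (\<rho> x) (q x) + g x * W x
        \<le> sA * (- (D (\<rho> x) (q x) + W x) + \<eta>)"
      by (simp add: algebra_simps)
    also have "\<dots> \<le> sA * (- a + \<eta>)"
      using A[OF 1] sA by (intro mult_left_mono) auto
    finally show ?thesis
      using 1 \<open>A \<inter> B = {}\<close> by (auto simp: indicator_def algebra_simps)
  next
    case 2
    with B[OF 2] g sB first_order \<rho>_nonneg[of x] have "\<Psi> (\<rho> x + g x) (q x) - \<Psi> (\<rho> x) (q x) + g x * W x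
        \<le> sB * (D (\<rho> x) (q x) + W x + \<eta>)"
      by (simp add: algebra_simps)
    also have "\<dots> \<le> sB * (b + \<eta>)"
      using B[OF 2] sB by (intro mult_left_mono) auto
    finally show ?thesis
      using 2 \<open>A \<inter> B = {}\<close> by (auto simp: indicator_def algebra_simps)
  qed (simp add: g)
qed

text \<open>Moving a small amount of mass from A, where the first variation exceeds a, to B,
  where it stays below b, would lower the energy at rate at least a - b.\<close>
lemma stable_no_level_gap:
  fixes \<rho> q W :: "'a::euclidean_space \<Rightarrow> real" and \<Psi> D :: "real \<Rightarrow> real \<Rightarrow> real"
  assumes stable: "stable_under_perturbations \<Psi> W q \<rho>"
    and [measurable]: "\<rho> \<in> borel_measurable lborel" "q \<in> borel_measurable lborel"
    and \<rho>_nonneg: "\<And>x. 0 \<le> \<rho> x" and q_nonneg: "\<And>x. 0 \<le> q x" and W: "continuous_on UNIV W"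
    and \<Psi>: "continuous_on quadrant (\<lambda>p. \<Psi> (fst p) (snd p))"
    and D: "continuous_on quadrant (\<lambda>p. D (fst p) (snd p))"
    and tangent: "\<And>r r' s. 0 \<le> r \<Longrightarrow> 0 \<le> r' \<Longrightarrow> 0 \<le> s \<Longrightarrow> \<Psi> r' s - \<Psi> r s \<le> D r' s * (r' - r)"
    and A: "A \<in> sets lborel" "0 < measure lborel A"
      "\<And>x. x \<in> A \<Longrightarrow> \<mu> \<le> \<rho> x \<and> \<rho> x \<le> M \<and> q x \<le> M \<and> norm x \<le> M \<and> a < D (\<rho> x) (q x) + W x"
    and B: "B \<in> sets lborel" "0 < measure lborel B"
      "\<And>x. x \<in> B \<Longrightarrow> \<rho> x \<le> M \<and> q x \<le> M \<and> norm x \<le> M \<and> D (\<rho> x) (q x) + W x < b"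
    and "0 < \<mu>" "b < a"
  shows False
proof -
  define \<eta> where "\<eta> = (a - b) / 4"
  have "0 < \<eta>" using \<open>b < a\<close> by (simp add: \<eta>_def)
  obtain \<delta> where "0 < \<delta>" and \<delta>: "\<And>r r' s. r \<in> {0..M + 1} \<Longrightarrow> r' \<in> {0..M + 1} \<Longrightarrow> s \<in> {0..M} \<Longrightarrow>
      \<bar>r' - r\<bar> < \<delta> \<Longrightarrow> \<bar>D r' s - D r s\<bar> < \<eta>"
    using uniformly_continuous_on_quadrant_box[OF D \<open>0 < \<eta>\<close>] by blast
  define mA mB where "mA = measure lborel A" and "mB = measure lborel B"
  have "0 < mA" "0 < mB" using A B by (simp_all add: mA_def mB_def)
  define t where "t = min (min (mA * \<mu>) mB) (min (mA * \<delta>) (mB * \<delta>)) / 2"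
  have "0 < t" using \<open>0 < mA\<close> \<open>0 < mB\<close> \<open>0 < \<delta>\<close> \<open>0 < \<mu>\<close> by (simp add: t_def)
  define sA sB where "sA = t / mA" and "sB = t / mB"
  have "2 * t \<le> mA * \<mu>" "2 * t \<le> mB" "2 * t \<le> mA * \<delta>" "2 * t \<le> mB * \<delta>"
    unfolding t_def by linarith+
  then have sA: "0 < sA" "sA \<le> \<mu>" "sA < \<delta>" and sB: "0 < sB" "sB \<le> 1" "sB < \<delta>"
    using \<open>0 < mA\<close> \<open>0 < mB\<close> \<open>0 < t\<close>
    by (auto simp: sA_def sB_def divide_le_eq divide_less_eq mult.commute)
  have "A \<inter> B = {}" using A(3) B(3) \<open>b < a\<close> by force
  have "sA * mA = sB * mB" using \<open>0 < mA\<close> \<open>0 < mB\<close> by (simp add: sA_def sB_def)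
  have A': "sA \<le> \<rho> x \<and> \<rho> x \<le> M \<and> q x \<le> M \<and> a < D (\<rho> x) (q x) + W x" if "x \<in> A" for x
    using A(3)[OF that] sA by linarith
  have B': "\<rho> x \<le> M \<and> q x \<le> M \<and> D (\<rho> x) (q x) + W x < b" if "x \<in> B" for x
    using B(3)[OF that] by linarith
  let ?g = "mass_transfer A B sA sB"
  let ?\<Delta> = "\<lambda>x. \<Psi> (\<rho> x + ?g x) (q x) - \<Psi> (\<rho> x) (q x) + ?g x * W x"
  have bounded: "\<rho> x \<le> M \<and> q x \<le> M \<and> norm x \<le> M" if "x \<in> A \<union> B" for x
    using that A(3) B(3) by blast
  note transfer = stable_mass_transfer[OF stable assms(2,3) \<rho>_nonneg q_nonneg W \<Psi> A(1) B(1)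
      \<open>A \<inter> B = {}\<close> A(2) B(2) bounded less_imp_le[OF sA(1)] less_imp_le[OF sB(1)] conjunct1[OF A']
      \<open>sA * mA = sB * mB\<close>[unfolded mA_def mB_def]]
  define R where "R x = (b + \<eta>) * sB * indicator B x - (a - \<eta>) * sA * indicator A x" for x
  have "integrable lborel (indicator A :: 'a \<Rightarrow> real)" "integrable lborel (indicator B :: 'a \<Rightarrow> real)"
    using A B by (auto intro!: integrable_real_indicator emeasure_finite_of_measure_pos)
  then have R: "integrable lborel R" "integral\<^sup>L lborel R = t * (b - a + 2 * \<eta>)"
    using \<open>0 < mA\<close> \<open>0 < mB\<close> by (simp_all add: R_def[abs_def] sA_def sB_def mA_def mB_def field_simps)
  have "?\<Delta> x \<le> R x" for x
    unfolding R_def using sA sB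
    by (intro mass_transfer_gain_le[where W=W, OF \<rho>_nonneg q_nonneg tangent \<delta> \<open>A \<inter> B = {}\<close> A' B']) auto
  from integral_mono[OF transfer(1) R(1) this]
  have "integral\<^sup>L lborel ?\<Delta> \<le> integral\<^sup>L lborel R" .
  with transfer(2) R(2) have "0 \<le> t * (b - a + 2 * \<eta>)" by linarith
  moreover have "t * (b - a + 2 * \<eta>) < 0"
    using \<open>0 < t\<close> \<open>b < a\<close> by (intro mult_pos_neg) (auto simp: \<eta>_def field_simps)
  ultimately show False by simp
qed

lemma exists_positive_measure_piece:
  fixes P :: "'a::euclidean_space \<Rightarrow> bool" and Q :: "nat \<Rightarrow> 'a \<Rightarrow> bool"
  assumes not_null: "\<not> (AE x in lborel. \<not> P x)" and exhaust: "\<And>x. P x \<Longrightarrow> \<exists>n. Q n x"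
    and measurable: "\<And>n. {x. P x \<and> Q n x} \<in> sets lborel"
    and bounded: "\<And>n x. Q n x \<Longrightarrow> norm x \<le> real n"
  shows "\<exists>n. 0 < measure lborel {x. P x \<and> Q n x}"
proof -
  have "\<exists>n. \<not> (AE x in lborel. \<not> (P x \<and> Q n x))"
  proof (rule ccontr)
    assume "\<nexists>n. \<not> (AE x in lborel. \<not> (P x \<and> Q n x))"
    then have "AE x in lborel. \<forall>n. \<not> (P x \<and> Q n x)" unfolding AE_all_countable by blast
    then have "AE x in lborel. \<not> P x" by (rule eventually_mono) (use exhaust in blast)
    with not_null show False by blast
  qed
  then obtain n where n: "\<not> (AE x in lborel. x \<notin> {x. P x \<and> Q n x})" by auto
  have "(AE x in lborel. x \<notin> {x. P x \<and> Q n x}) \<longleftrightarrow> emeasure lborel {x. P x \<and> Q n x} = 0"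
    using measurable[of n] by (intro AE_iff_measurable) auto
  with n have "emeasure lborel {x. P x \<and> Q n x} \<noteq> 0" by blast
  moreover have "bounded {x. P x \<and> Q n x}"
    using bounded unfolding bounded_iff by blast
  then have "emeasure lborel {x. P x \<and> Q n x} < \<infinity>"
    using emeasure_bounded_finite by simp
  ultimately show ?thesis
    by (auto simp: measure_def enn2real_positive_iff zero_less_iff_neq_zero)
qed

lemma stable_dichotomy:
  fixes \<rho> q W :: "'a::euclidean_space \<Rightarrow> real" and \<Psi> D :: "real \<Rightarrow> real \<Rightarrow> real"
  assumes stable: "stable_under_perturbations \<Psi> W q \<rho>"
    and [measurable]: "\<rho> \<in> borel_measurable lborel" "q \<in> borel_measurable lborel"
    and \<rho>_nonneg: "\<And>x. 0 \<le> \<rho> x" and q_nonneg: "\<And>x. 0 \<le> q x" and W: "continuous_on UNIV W"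
    and \<Psi>: "continuous_on quadrant (\<lambda>p. \<Psi> (fst p) (snd p))"
    and D: "continuous_on quadrant (\<lambda>p. D (fst p) (snd p))"
    and tangent: "\<And>r r' s. 0 \<le> r \<Longrightarrow> 0 \<le> r' \<Longrightarrow> 0 \<le> s \<Longrightarrow> \<Psi> r' s - \<Psi> r s \<le> D r' s * (r' - r)"
    and "b < a"
  shows "(AE x in lborel. b \<le> D (\<rho> x) (q x) + W x) \<or> (AE x in lborel. 0 < \<rho> x \<longrightarrow> D (\<rho> x) (q x) + W x \<le> a)"
proof (rule ccontr)
  define \<Phi> where "\<Phi> x = D (\<rho> x) (q x) + W x" for x
  have [measurable]: "\<Phi> \<in> borel_measurable lborel"
    using borel_measurable_on_quadrant[OF D assms(2,3) \<rho>_nonneg q_nonneg]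
      borel_measurable_continuous_onI[OF W] unfolding \<Phi>_def by measurable
  let ?bounded = "\<lambda>n x. \<rho> x \<le> real n \<and> q x \<le> real n \<and> norm x \<le> real n"
  assume contra: "\<not> ?thesis"
  have above: "\<not> (AE x in lborel. \<not> (0 < \<rho> x \<and> a < \<Phi> x))"
  proof
    assume "AE x in lborel. \<not> (0 < \<rho> x \<and> a < \<Phi> x)"
    then have "AE x in lborel. 0 < \<rho> x \<longrightarrow> \<Phi> x \<le> a" by (rule eventually_mono) auto
    with contra show False unfolding \<Phi>_def by blast
  qed
  have below: "\<not> (AE x in lborel. \<not> \<Phi> x < b)"
  proof
    assume "AE x in lborel. \<not> \<Phi> x < b"
    then have "AE x in lborel. b \<le> \<Phi> x" by (rule eventually_mono) auto
    with contra show False unfolding \<Phi>_def by blast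
  qed
  have sets: "{x. (0 < \<rho> x \<and> a < \<Phi> x) \<and> inverse (real (Suc n)) \<le> \<rho> x \<and> ?bounded n x} \<in> sets lborel"
    "{x. \<Phi> x < b \<and> ?bounded n x} \<in> sets lborel" for n
    by measurable measurable
  have "\<exists>n. 0 < measure lborel {x. (0 < \<rho> x \<and> a < \<Phi> x) \<and> inverse (real (Suc n)) \<le> \<rho> x \<and> ?bounded n x}"
  proof (rule exists_positive_measure_piece[OF above _ sets(1)])
    fix x assume x: "0 < \<rho> x \<and> a < \<Phi> x"
    obtain n :: nat where n: "max (max (\<rho> x) (q x)) (max (norm x) (inverse (\<rho> x))) \<le> real n"
      using real_arch_simple by blast
    then have "inverse (real (Suc n)) \<le> inverse (inverse (\<rho> x))"
      using x by (intro le_imp_inverse_le) auto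
    with n show "\<exists>n. inverse (real (Suc n)) \<le> \<rho> x \<and> ?bounded n x" by auto
  qed auto
  then obtain n where
    A: "0 < measure lborel {x. (0 < \<rho> x \<and> a < \<Phi> x) \<and> inverse (real (Suc n)) \<le> \<rho> x \<and> ?bounded n x}"
    by blast
  have "\<exists>m. 0 < measure lborel {x. \<Phi> x < b \<and> ?bounded m x}"
    by (rule exists_positive_measure_piece[OF below _ sets(2)])
      (use real_arch_simple[of "max (max (\<rho> x) (q x)) (norm x)" for x] in auto)
  then obtain m where B: "0 < measure lborel {x. \<Phi> x < b \<and> ?bounded m x}"
    by blast
  show False
    by (rule stable_no_level_gap[OF stable assms(2,3) \<rho>_nonneg q_nonneg W \<Psi> D tangent sets(1) A _ sets(2) B,
          where \<mu>="inverse (real (Suc n))" and M="real (max n m)"])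
      (use \<open>b < a\<close> in \<open>auto simp: \<Phi>_def\<close>)
qed

lemma stable_Euler_Lagrange:
  fixes \<rho> q W :: "'a::euclidean_space \<Rightarrow> real" and \<Psi> D :: "real \<Rightarrow> real \<Rightarrow> real"
  assumes stable: "stable_under_perturbations \<Psi> W q \<rho>"
    and [measurable]: "\<rho> \<in> borel_measurable lborel" "q \<in> borel_measurable lborel"
    and \<rho>_nonneg: "\<And>x. 0 \<le> \<rho> x" and q_nonneg: "\<And>x. 0 \<le> q x"
    and W: "continuous_on UNIV W" and W_nonneg: "\<And>x. 0 \<le> W x"
    and \<Psi>: "continuous_on quadrant (\<lambda>p. \<Psi> (fst p) (snd p))"
    and D: "continuous_on quadrant (\<lambda>p. D (fst p) (snd p))"
    and tangent: "\<And>r r' s. 0 \<le> r \<Longrightarrow> 0 \<le> r' \<Longrightarrow> 0 \<le> s \<Longrightarrow> \<Psi> r' s - \<Psi> r s \<le> D r' s * (r' - r)"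
    and D_zero: "\<And>s. 0 \<le> s \<Longrightarrow> D 0 s = 0" and D_pos: "\<And>r s. 0 < r \<Longrightarrow> 0 \<le> s \<Longrightarrow> 0 < D r s"
  shows "\<exists>C. (AE x in lborel. D (\<rho> x) (q x) = max (C - W x) 0) \<and> (AE x in lborel. 0 < \<rho> x \<longleftrightarrow> W x < C)"
proof -
  have D_nonneg: "0 \<le> D (\<rho> x) (q x)" for x
    using D_zero[OF q_nonneg] D_pos[OF _ q_nonneg] \<rho>_nonneg[of x]
    by (cases "\<rho> x = 0") (auto intro: less_imp_le)
  obtain C where lower: "AE x in lborel. C \<le> D (\<rho> x) (q x) + W x"
    and upper: "AE x in lborel. 0 < \<rho> x \<longrightarrow> D (\<rho> x) (q x) + W x \<le> C"
    using constant_from_dichotomy[where lb=0,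
        OF stable_dichotomy[OF stable assms(2,3) \<rho>_nonneg q_nonneg W \<Psi> D tangent]]
      D_nonneg W_nonneg by (force intro: AE_I2 add_nonneg_nonneg)
  have pointwise: "D (\<rho> x) (q x) = max (C - W x) 0 \<and> (0 < \<rho> x \<longleftrightarrow> W x < C)"
    if "C \<le> D (\<rho> x) (q x) + W x" "0 < \<rho> x \<longrightarrow> D (\<rho> x) (q x) + W x \<le> C" for x
    using that D_zero[OF q_nonneg] D_pos[OF _ q_nonneg, of "\<rho> x" x] \<rho>_nonneg[of x]
    by (cases "\<rho> x = 0") auto
  have "AE x in lborel. D (\<rho> x) (q x) = max (C - W x) 0 \<and> (0 < \<rho> x \<longleftrightarrow> W x < C)"
    using lower upper by eventually_elim (rule pointwise)
  then show ?thesis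
    by (intro exI[of _ C]) (auto elim: eventually_mono)
qed

section \<open>Minimizers of the energy\<close>

definition energy_density ::
    "(real \<Rightarrow> real) \<Rightarrow> (real \<Rightarrow> real) \<Rightarrow> (real \<times> real \<Rightarrow> real) \<Rightarrow> ('a::euclidean_space \<Rightarrow> real) \<Rightarrow>
      real \<Rightarrow> ('a \<Rightarrow> real) \<Rightarrow> ('a \<Rightarrow> real) \<Rightarrow> 'a \<Rightarrow> real" where
  "energy_density F1 F2 h K \<epsilon> \<rho>1 \<rho>2 x =
     F1 (\<rho>1 x) + F2 (\<rho>2 x) + \<epsilon> * h (\<rho>1 x, \<rho>2 x) + \<rho>1 x * conv K \<rho>2 x"

lemma energy_eq_integral_density:
  "energy F1 F2 h K \<epsilon> \<rho>1 \<rho>2 =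
    (if integrable lborel (energy_density F1 F2 h K \<epsilon> \<rho>1 \<rho>2)
     then ereal (integral\<^sup>L lborel (energy_density F1 F2 h K \<epsilon> \<rho>1 \<rho>2)) else \<infinity>)"
  unfolding energy_def energy_density_def[abs_def] Let_def ..

lemma integral_nonneg_if_energy_le:
  assumes le: "energy F1 F2 h K \<epsilon> \<rho>1 \<rho>2 \<le> energy F1 F2 h K \<epsilon> \<sigma>1 \<sigma>2"
    and finite: "integrable lborel (energy_density F1 F2 h K \<epsilon> \<rho>1 \<rho>2)"
    and difference: "\<And>x. energy_density F1 F2 h K \<epsilon> \<sigma>1 \<sigma>2 x = energy_density F1 F2 h K \<epsilon> \<rho>1 \<rho>2 x + \<Delta> x"
    and \<Delta>: "integrable lborel \<Delta>"
  shows "0 \<le> integral\<^sup>L lborel \<Delta>"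
proof -
  have "energy_density F1 F2 h K \<epsilon> \<sigma>1 \<sigma>2 = (\<lambda>x. energy_density F1 F2 h K \<epsilon> \<rho>1 \<rho>2 x + \<Delta> x)"
    using difference by auto
  with le finite \<Delta> show ?thesis
    unfolding energy_eq_integral_density by simp
qed

lemma P2dens_indicator:
  fixes Q :: "'a::euclidean_space set"
  assumes Q: "Q \<in> sets lborel" "bounded Q" "measure lborel Q = 1"
  shows "P2dens (indicator Q)"
  unfolding P2dens_def
proof (intro conjI allI)
  obtain R where R: "\<And>x. x \<in> Q \<Longrightarrow> norm x \<le> R"
    using Q(2) unfolding bounded_iff by blast
  show "integrable lborel (indicator Q :: 'a \<Rightarrow> real)"
    using Q emeasure_bounded_finite[OF Q(2)] by (intro integrable_real_indicator) auto
  show "integrable lborel (\<lambda>x. (norm x)\<^sup>2 * indicator Q x)"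
    using R Q(1) by (intro integrable_bounded_support[where c="R\<^sup>2" and R=R])
      (auto simp: indicator_def intro: power_mono)
qed (use Q in simp_all)

lemma P2dens_perturbation:
  assumes \<rho>: "P2dens \<rho>" and g: "g \<in> borel_measurable lborel" "\<And>x. \<bar>g x\<bar> \<le> M"
    "\<And>x. g x \<noteq> 0 \<Longrightarrow> norm x \<le> M" "\<And>x. 0 \<le> \<rho> x + g x" "integral\<^sup>L lborel g = 0"
  shows "P2dens (\<lambda>x. \<rho> x + g x)"
proof -
  have "finite_second_moment g"
    using g(1-3) by (rule finite_second_moment_bounded_support)
  then show ?thesis
    using \<rho> g(1,4,5) unfolding P2dens_def finite_second_moment_def
    by (auto simp: distrib_left)
qed

lemma integrable_add_right_iff:
  fixes f g :: "'a \<Rightarrow> real"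
  assumes "integrable M g"
  shows "integrable M (\<lambda>x. f x + g x) \<longleftrightarrow> integrable M f"
proof
  assume "integrable M (\<lambda>x. f x + g x)"
  from Bochner_Integration.integrable_diff[OF this assms] show "integrable M f" by simp
qed (use assms in simp)

context convex_quadratic_kernel
begin

lemma finite_energy_pair_exists:
  assumes "F1 0 = 0" "F2 0 = 0" "h (0, 0) = 0"
  obtains \<sigma> :: "'a \<Rightarrow> real" where "P2dens \<sigma>" "energy F1 F2 h K \<epsilon> \<sigma> \<sigma> < \<infinity>"
proof -
  define Q where "Q = cbox (0::'a) One"
  have Q: "Q \<in> sets lborel" "compact Q" "measure lborel Q = 1"
    by (auto simp: Q_def measure_lborel_cbox_eq)
  obtain R where R: "\<And>x. x \<in> Q \<Longrightarrow> norm x \<le> R"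
    using compact_imp_bounded[OF Q(2)] unfolding bounded_iff by blast
  have \<sigma>: "P2dens (indicator Q)"
    using Q by (intro P2dens_indicator) (auto intro: compact_imp_bounded)
  have "continuous_on Q (conv K (indicator Q))"
    using continuous_on_subset[OF continuous_on_conv[OF \<sigma>]] by simp
  with Q(2) obtain c where "0 \<le> c" and c: "\<And>x. x \<in> Q \<Longrightarrow> norm (conv K (indicator Q) x) \<le> c"
    by (rule continuous_on_compact_bound) auto
  define c0 where "c0 = F1 1 + F2 1 + \<epsilon> * h (1, 1)"
  have "energy_density F1 F2 h K \<epsilon> (indicator Q) (indicator Q)
      = (\<lambda>x. indicator Q x * (c0 + conv K (indicator Q) x))"
    using assms by (simp add: fun_eq_iff energy_density_def c0_def indicator_def)
  moreover have "integrable lborel (\<lambda>x. indicator Q x * (c0 + conv K (indicator Q) x))"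
  proof (rule integrable_bounded_support[where c="\<bar>c0\<bar> + c" and R=R])
    show "(\<lambda>x. indicator Q x * (c0 + conv K (indicator Q) x)) \<in> borel_measurable lborel"
      using Q(1) by measurable
    fix x
    show "\<bar>indicator Q x * (c0 + conv K (indicator Q) x)\<bar> \<le> \<bar>c0\<bar> + c"
      using c[of x] \<open>0 \<le> c\<close> by (cases "x \<in> Q") auto
    show "indicator Q x * (c0 + conv K (indicator Q) x) \<noteq> 0 \<Longrightarrow> norm x \<le> R"
      using R[of x] by (cases "x \<in> Q") auto
  qed
  ultimately have "energy F1 F2 h K \<epsilon> (indicator Q) (indicator Q) < \<infinity>"
    unfolding energy_eq_integral_density by simp
  with \<sigma> show ?thesis by (rule that)
qed

lemma minimizer_stable:
  fixes F G :: "real \<Rightarrow> real" and H :: "real \<times> real \<Rightarrow> real"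
  assumes \<rho>: "P2dens \<rho>" and \<sigma>: "P2dens \<sigma>"
    and zero: "F 0 = 0" "G 0 = 0" "H (0, 0) = 0"
    and \<Psi>: "continuous_on quadrant (\<lambda>p. F (fst p) + \<epsilon> * H p)"
    and minimal: "\<And>\<rho>' \<sigma>'. P2dens \<rho>' \<Longrightarrow> P2dens \<sigma>' \<Longrightarrow> energy F G H K \<epsilon> \<rho> \<sigma> \<le> energy F G H K \<epsilon> \<rho>' \<sigma>'"
  shows "stable_under_perturbations (\<lambda>r s. F r + \<epsilon> * H (r, s)) (conv K \<sigma>) \<sigma> \<rho>"
  unfolding stable_under_perturbations_def
proof (intro allI impI)
  fix g M
  assume g: "g \<in> borel_measurable lborel" "\<forall>x. \<bar>g x\<bar> \<le> M"
    "\<forall>x. g x \<noteq> 0 \<longrightarrow> \<rho> x \<le> M \<and> \<sigma> x \<le> M \<and> norm x \<le> M" "\<forall>x. 0 \<le> \<rho> x + g x"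
    "integral\<^sup>L lborel g = 0"
  obtain \<tau> where "P2dens \<tau>" "energy F G H K \<epsilon> \<tau> \<tau> < \<infinity>"
    using finite_energy_pair_exists[of F G H, OF zero] .
  with minimal[of \<tau> \<tau>] have finite: "integrable lborel (energy_density F G H K \<epsilon> \<rho> \<sigma>)"
    unfolding energy_eq_integral_density by (auto split: if_splits)
  have perturbed: "P2dens (\<lambda>x. \<rho> x + g x)"
    using g by (intro P2dens_perturbation[OF \<rho>, of g M]) auto
  have "integrable lborel (\<lambda>x. F (\<rho> x + g x) + \<epsilon> * H (\<rho> x + g x, \<sigma> x)
      - (F (\<rho> x) + \<epsilon> * H (\<rho> x, \<sigma> x)) + g x * conv K \<sigma> x)"
    using \<rho> \<sigma> g \<Psi> continuous_on_conv[OF \<sigma>]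
    by (intro integrable_perturbation_integrand[where \<Psi>="\<lambda>r s. F r + \<epsilon> * H (r, s)" and M=M])
      (auto simp: P2dens_def)
  then show "0 \<le> (LINT x|lborel. (F (\<rho> x + g x) + \<epsilon> * H (\<rho> x + g x, \<sigma> x))
      - (F (\<rho> x) + \<epsilon> * H (\<rho> x, \<sigma> x)) + g x * conv K \<sigma> x)"
    by (rule integral_nonneg_if_energy_le[OF minimal[OF perturbed \<sigma>] finite, rotated])
      (simp add: energy_density_def algebra_simps)
qed

lemma energy_swap:
  assumes \<rho>1: "P2dens \<rho>1" and \<rho>2: "P2dens \<rho>2"
  shows "energy F1 F2 h K \<epsilon> \<rho>1 \<rho>2 = energy F2 F1 (\<lambda>p. h (snd p, fst p)) K \<epsilon> \<rho>2 \<rho>1"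
proof -
  define L where "L x = F1 (\<rho>1 x) + F2 (\<rho>2 x) + \<epsilon> * h (\<rho>1 x, \<rho>2 x)" for x
  have split: "energy_density F1 F2 h K \<epsilon> \<rho>1 \<rho>2 = (\<lambda>x. L x + \<rho>1 x * conv K \<rho>2 x)"
    "energy_density F2 F1 (\<lambda>p. h (snd p, fst p)) K \<epsilon> \<rho>2 \<rho>1 = (\<lambda>x. L x + \<rho>2 x * conv K \<rho>1 x)"
    by (auto simp: fun_eq_iff energy_density_def L_def)
  note moments = P2dens_finite_second_moment[OF \<rho>1] P2dens_finite_second_moment[OF \<rho>2]
  note interaction = integrable_mult_conv[OF moments] integral_mult_conv_commute[OF moments]
    integrable_mult_conv[OF moments(2,1)]
  have "integrable lborel (\<lambda>x. L x + \<rho>1 x * conv K \<rho>2 x) \<longleftrightarrow> integrable lborel L"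
    "integrable lborel (\<lambda>x. L x + \<rho>2 x * conv K \<rho>1 x) \<longleftrightarrow> integrable lborel L"
    using interaction by (simp_all add: integrable_add_right_iff)
  then show ?thesis
    unfolding energy_eq_integral_density split using interaction by simp
qed

lemma minimizer_Euler_Lagrange:
  fixes F F' F'' G :: "real \<Rightarrow> real" and H Hr :: "real \<times> real \<Rightarrow> real"
  assumes F: "F_hyp F F' F''" and "G 0 = 0"
    and H: "continuous_on quadrant H" "H (0, 0) = 0"
    and H_deriv: "\<And>r s. 0 \<le> r \<Longrightarrow> 0 \<le> s \<Longrightarrow> ((\<lambda>r. H (r, s)) has_real_derivative Hr (r, s)) (at r within {0..})"
    and Hr: "continuous_on quadrant Hr" "\<And>s. 0 \<le> s \<Longrightarrow> Hr (0, s) = 0"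
    and convex: "\<And>s. 0 \<le> s \<Longrightarrow> convex_on {0..} (\<lambda>r. F r + 2 * \<epsilon>0 * H (r, s))"
    and \<epsilon>: "0 < \<epsilon>" "\<epsilon> \<le> \<epsilon>0"
    and \<rho>: "P2dens \<rho>" and \<sigma>: "P2dens \<sigma>"
    and minimal: "\<And>\<rho>' \<sigma>'. P2dens \<rho>' \<Longrightarrow> P2dens \<sigma>' \<Longrightarrow> energy F G H K \<epsilon> \<rho> \<sigma> \<le> energy F G H K \<epsilon> \<rho>' \<sigma>'"
  shows "\<exists>C>0. (AE x in lborel. F' (\<rho> x) + \<epsilon> * Hr (\<rho> x, \<sigma> x) = max (C - conv K \<sigma> x) 0) \<and>
    dsupp \<rho> = {x. conv K \<sigma> x \<le> C} \<and> compact (dsupp \<rho>) \<and> convex (dsupp \<rho>)"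
proof -
  note D = first_variation_properties[OF F H_deriv Hr convex \<epsilon>]
  have "continuous_on quadrant (\<lambda>p. F (fst p))"
    by (rule continuous_on_compose2[OF F_hyp_continuous(1)[OF F] continuous_on_fst[OF continuous_on_id]])
      (auto simp: quadrant_def)
  then have \<Psi>: "continuous_on quadrant (\<lambda>p. F (fst p) + \<epsilon> * H p)"
    by (intro continuous_intros H(1))
  have "stable_under_perturbations (\<lambda>r s. F r + \<epsilon> * H (r, s)) (conv K \<sigma>) \<sigma> \<rho>"
    by (rule minimizer_stable[OF \<rho> \<sigma> F_hyp_zero(1)[OF F] \<open>G 0 = 0\<close> H(2) \<Psi> minimal])
  from stable_Euler_Lagrange[OF this, where D="\<lambda>r s. F' r + \<epsilon> * Hr (r, s)"]
  obtain C where EL: "AE x in lborel. F' (\<rho> x) + \<epsilon> * Hr (\<rho> x, \<sigma> x) = max (C - conv K \<sigma> x) 0"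
    and positive: "AE x in lborel. 0 < \<rho> x \<longleftrightarrow> conv K \<sigma> x < C"
    using \<rho> \<sigma> \<Psi> D continuous_on_conv[OF \<sigma>] conv_nonneg[of \<sigma>]
    by (auto simp: P2dens_def)
  have "convex_on UNIV (conv K \<sigma>)"
    using \<sigma> by (intro convex_on_conv) (auto simp: P2dens_finite_second_moment P2dens_def)
  with dsupp_eq_sublevel[OF \<rho> continuous_on_conv[OF \<sigma>] _ _ bounded_sublevel_conv[OF \<sigma>] positive]
  show ?thesis
    using EL conv_nonneg[of \<sigma>] \<sigma> by (auto simp: P2dens_def)
qed

end

theorem theorem3p8:
  fixes K :: "'a::euclidean_space \<Rightarrow> real"
    and F1 F1' F1'' F2 F2' F2'' :: "real \<Rightarrow> real"
    and h h1 h2 h11 h12 h21 h22 :: "real \<times> real \<Rightarrow> real"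
    and \<epsilon>0 \<epsilon> :: real
    and \<rho>1 \<rho>2 :: "'a \<Rightarrow> real"
  assumes hK: "K_hyp K"
    and hF1: "F_hyp F1 F1' F1''" and hF2: "F_hyp F2 F2' F2''"
    and hh: "h_hyp h h1 h2 h11 h12 h21 h22"
    and ht11: "theta_hyp h11 F1'' fst fst F1' F2'"
    and ht12: "theta_hyp h12 F2'' snd fst F1' F2'"
    and ht21: "theta_hyp h21 F1'' fst snd F1' F2'"
    and ht22: "theta_hyp h22 F2'' snd snd F1' F2'"
    and he0: "\<epsilon>0 > 0"
    and hconv: "convex_on quadrant (\<lambda>r. F1 (fst r) + F2 (snd r) + 2 * \<epsilon>0 * h r)"
    and heps: "0 < \<epsilon>" "\<epsilon> \<le> \<epsilon>0"
    and hX0: "X0 \<rho>1 \<rho>2"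
    and hmin: "\<And>\<sigma>1 \<sigma>2. P2dens \<sigma>1 \<Longrightarrow> P2dens \<sigma>2 \<Longrightarrow>
                 energy F1 F2 h K \<epsilon> \<rho>1 \<rho>2 \<le> energy F1 F2 h K \<epsilon> \<sigma>1 \<sigma>2"
  shows "\<exists>C1 C2. C1 > 0 \<and> C2 > 0 \<and>
     (AE x in lborel. F1' (\<rho>1 x) + \<epsilon> * h1 (\<rho>1 x, \<rho>2 x) = max (C1 - conv K \<rho>2 x) 0) \<and>
     (AE x in lborel. F2' (\<rho>2 x) + \<epsilon> * h2 (\<rho>1 x, \<rho>2 x) = max (C2 - conv K \<rho>1 x) 0) \<and>
     dsupp \<rho>1 = {x. conv K \<rho>2 x \<le> C1} \<and> dsupp \<rho>2 = {x. conv K \<rho>1 x \<le> C2} \<and>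
     compact (dsupp \<rho>1) \<and> convex (dsupp \<rho>1) \<and>
     compact (dsupp \<rho>2) \<and> convex (dsupp \<rho>2)"
proof -
  obtain lam CK where "convex_quadratic_kernel K lam CK"
    using K_hyp_imp_convex_quadratic_kernel[OF hK] .
  then interpret convex_quadratic_kernel K lam CK .
  have \<rho>1: "P2dens \<rho>1" and \<rho>2: "P2dens \<rho>2" using hX0 by (simp_all add: X0_def)
  note h = h_hyp_D[OF hh] and slices = convex_on_quadrant_separable_slices[OF hconv]
  have swapped_minimal: "energy F2 F1 (\<lambda>p. h (snd p, fst p)) K \<epsilon> \<rho>2 \<rho>1
      \<le> energy F2 F1 (\<lambda>p. h (snd p, fst p)) K \<epsilon> \<sigma>2 \<sigma>1" if "P2dens \<sigma>2" "P2dens \<sigma>1" for \<sigma>1 \<sigma>2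
    using hmin[OF that(2,1)] energy_swap[OF \<rho>1 \<rho>2] energy_swap[OF that(2,1)] by simp
  have "\<exists>C2>0. (AE x in lborel. F2' (\<rho>2 x) + \<epsilon> * h2 (\<rho>1 x, \<rho>2 x) = max (C2 - conv K \<rho>1 x) 0) \<and>
      dsupp \<rho>2 = {x. conv K \<rho>1 x \<le> C2} \<and> compact (dsupp \<rho>2) \<and> convex (dsupp \<rho>2)"
    using minimizer_Euler_Lagrange[where G=F1 and H="\<lambda>p. h (snd p, fst p)" and Hr="\<lambda>p. h2 (snd p, fst p)",
        OF hF2 F_hyp_zero(1)[OF hF1] continuous_on_quadrant_swap[OF h(1)] _ _
          continuous_on_quadrant_swap[OF h(3)] _ _ heps \<rho>2 \<rho>1]
    by (simp add: h(5,6,8) slices(2) swapped_minimal)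
  moreover have "\<exists>C1>0. (AE x in lborel. F1' (\<rho>1 x) + \<epsilon> * h1 (\<rho>1 x, \<rho>2 x) = max (C1 - conv K \<rho>2 x) 0) \<and>
      dsupp \<rho>1 = {x. conv K \<rho>2 x \<le> C1} \<and> compact (dsupp \<rho>1) \<and> convex (dsupp \<rho>1)"
    by (rule minimizer_Euler_Lagrange[OF hF1 F_hyp_zero(1)[OF hF2] h(1) h(6) h(4) h(2) h(7) slices(1)
          heps \<rho>1 \<rho>2 hmin])
  ultimately show ?thesis by blast
qed

end
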